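(* For $1\le k\le n$ let $\mathcal F(k)=\sum_{r\ge0}\frac{(-1)^r}{r!}h_k^{[r]}\otimes e_k^rt^r$ with $h_k=\mathcal D_K(x^{\epsilon_k+\epsilon_{-k}})$, $e_k=\mathcal D_K(x^{2\epsilon_k+\epsilon_{-k}})$. Then for $1\le k\ne k'\le n$, the product $\mathcal F(k)\mathcal F(k')$ is again a Drinfel'd twist on the Hopf algebra $U(\mathbf K^+)[[t]]$ (with its standard Hopf structure).
   Context: Let $\mathbb F$ be a field of characteristic $0$ and $n\ge1$. Coordinates are indexed by $\{-n,\dots,-1,0,1,\dots,n\}$; $\epsilon_i\in\mathbb Z^{2n+1}$ is the $i$-th unit vector and, for $\alpha\in\mathbb Z^{2n+1}$, $x^\alpha=\prod_i x_i^{\alpha_i}$ in $\mathbb F[x_{-n}^{\pm1},\dots,x_n^{\pm1}]$. Define the derivation $\mathcal D_K(x^\alpha)=\big(2-\sum_{i=1}^n(\alpha_i+\alpha_{-i})\big)x^\alpha\frac{\partial}{\partial x_0}+\sum_{i=1}^n\Big[(\alpha_0x^{\alpha+\epsilon_i-\epsilon_0}+\alpha_{-i}x^{\alpha-\epsilon_{-i}})\frac{\partial}{\partial x_i}+(\alpha_0x^{\alpha+\epsilon_{-i}-\epsilon_0}-\alpha_ix^{\alpha-\epsilon_i})\frac{\partial}{\partial x_{-i}}\Big]$, extended linearly. The generalized Cartan type $K$ Lie algebra $\mathbf K$ is the Lie algebra of derivations (commutator bracket) with basis $\{\mathcal D_K(x^\alpha):\alpha\in\mathbb Z^{2n+1}\}$;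 explicitly $[\mathcal D_K(x^\alpha),\mathcal D_K(x^\beta)]=\mathcal D_K\Big(\big((2-\sum_{i=1}^n(\alpha_i+\alpha_{-i}))\beta_0-(2-\sum_{i=1}^n(\beta_i+\beta_{-i}))\alpha_0\big)x^{\alpha+\beta-\epsilon_0}+\sum_{i=1}^n(\alpha_{-i}\beta_i-\alpha_i\beta_{-i})x^{\alpha+\beta-\epsilon_i-\epsilon_{-i}}\Big)$. $\mathbf K^+$ is the subalgebra spanned by $\mathcal D_K(x^\alpha)$, $\alpha\in\mathbb Z_{\ge0}^{2n+1}$. $x^{[m]}=x(x-1)\cdots(x-m+1)$ ($x^{[0]}=1$). $U(L)[[t]]$ carries the standard Hopf structure $\Delta_0(y)=y\otimes1+1\otimes y$, $S_0(y)=-y$, $\varepsilon(y)=0$ for $y\in L$. A Drinfel'd twist on a Hopf algebra $(A,\Delta_0,\varepsilon)$ is an invertible $\mathcal F\in A\otimes A$ with $(\mathcal F\otimes1)(\Delta_0\otimes\mathrm{Id})(\mathcal F)=(1\otimes\mathcal F)(\mathrm{Id}\otimes\Delta_0)(\mathcal F)$ and $(\varepsilon\otimes\mathrm{Id})(\mathcal F)=1=(\mathrm{Id}\otimes\varepsilon)(\mathcal F)$ (tensor products completed $t$-adically). *)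

theory Defs
  imports Main
begin

text \<open>Exponents alpha in Z^{2n+1} are functions int => int (coordinates -n..n, zero
outside). The basis element D_K(x^alpha) of K^+ is identified with alpha.\<close>

definition valid_exp :: "nat \<Rightarrow> (int \<Rightarrow> int) \<Rightarrow> bool" where
  "valid_exp n \<alpha> \<longleftrightarrow> (\<forall>i. 0 \<le> \<alpha> i) \<and> (\<forall>i. int n < \<bar>i\<bar> \<longrightarrow> \<alpha> i = 0)"

definition unitv :: "int \<Rightarrow> int \<Rightarrow> int" where
  "unitv i = (\<lambda>j. if j = i then 1 else 0)"

definition deg_sum :: "nat \<Rightarrow> (int \<Rightarrow> int) \<Rightarrow> int" where
  "deg_sum n \<alpha> = (\<Sum>i\<in>{1..int n}. \<alpha> i + \<alpha> (-i))"

text \<open>Coefficient of D_K(x^gamma) in [D_K(x^alpha), D_K(x^beta)].\<close>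
definition brk_coef :: "nat \<Rightarrow> (int \<Rightarrow> int) \<Rightarrow> (int \<Rightarrow> int) \<Rightarrow> (int \<Rightarrow> int) \<Rightarrow> int" where
  "brk_coef n \<alpha> \<beta> \<gamma> =
     (if \<gamma> = (\<lambda>j. \<alpha> j + \<beta> j - unitv 0 j)
      then (2 - deg_sum n \<alpha>) * \<beta> 0 - (2 - deg_sum n \<beta>) * \<alpha> 0 else 0)
   + (\<Sum>i\<in>{1..int n}. if \<gamma> = (\<lambda>j. \<alpha> j + \<beta> j - unitv i j - unitv (-i) j)
                      then \<alpha> (-i) * \<beta> i - \<alpha> i * \<beta> (-i) else 0)"

text \<open>A generator (j, alpha) stands for D_K(x^alpha) placed in the j-th tensor factor.
Elements of the free algebra are coefficient functions on words.\<close>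

type_synonym gen = "nat \<times> (int \<Rightarrow> int)"

definition fa_zero :: "gen list \<Rightarrow> 'a::field" where
  "fa_zero = (\<lambda>w. 0)"

definition fa_one :: "gen list \<Rightarrow> 'a::field" where
  "fa_one = (\<lambda>w. if w = [] then 1 else 0)"

definition fa_gen :: "gen \<Rightarrow> gen list \<Rightarrow> 'a::field" where
  "fa_gen g = (\<lambda>w. if w = [g] then 1 else 0)"

definition fa_word :: "gen list \<Rightarrow> gen list \<Rightarrow> 'a::field" where
  "fa_word u = (\<lambda>w. if w = u then 1 else 0)"

definition fa_add :: "(gen list \<Rightarrow> 'a::field) \<Rightarrow> (gen list \<Rightarrow> 'a) \<Rightarrow> gen list \<Rightarrow> 'a" where
  "fa_add x y = (\<lambda>w. x w + y w)"

definition fa_sub :: "(gen list \<Rightarrow> 'a::field) \<Rightarrow> (gen list \<Rightarrow> 'a) \<Rightarrow> gen list \<Rightarrow> 'a" where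
  "fa_sub x y = (\<lambda>w. x w - y w)"

definition fa_smult :: "'a::field \<Rightarrow> (gen list \<Rightarrow> 'a) \<Rightarrow> gen list \<Rightarrow> 'a" where
  "fa_smult c x = (\<lambda>w. c * x w)"

definition fa_mult :: "(gen list \<Rightarrow> 'a::field) \<Rightarrow> (gen list \<Rightarrow> 'a) \<Rightarrow> gen list \<Rightarrow> 'a" where
  "fa_mult x y = (\<lambda>w. \<Sum>i\<le>length w. x (take i w) * y (drop i w))"

definition fa_elem :: "nat \<Rightarrow> nat \<Rightarrow> (gen list \<Rightarrow> 'a::field) \<Rightarrow> bool" where
  "fa_elem n m x \<longleftrightarrow> finite {w. x w \<noteq> 0} \<and>
     (\<forall>w. x w \<noteq> 0 \<longrightarrow> (\<forall>g\<in>set w. fst g < m \<and> valid_exp n (snd g)))"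

section \<open>U(K^+)^{\<otimes>m} = free algebra modulo the two-sided ideal of relations\<close>

definition bracket_elem :: "nat \<Rightarrow> nat \<Rightarrow> (int \<Rightarrow> int) \<Rightarrow> (int \<Rightarrow> int) \<Rightarrow> gen list \<Rightarrow> 'a::field" where
  "bracket_elem n j \<alpha> \<beta> =
     (\<lambda>w. if (\<exists>\<gamma>. w = [(j, \<gamma>)]) then of_int (brk_coef n \<alpha> \<beta> (snd (hd w))) else 0)"

text \<open>Relations: x y - y x - [x,y] inside one tensor factor; factors in different
tensor slots commute.\<close>
definition rels :: "nat \<Rightarrow> nat \<Rightarrow> (gen list \<Rightarrow> 'a::field) set" where
  "rels n m =
     {fa_sub (fa_sub (fa_mult (fa_gen (j, \<alpha>)) (fa_gen (j, \<beta>))) (fa_mult (fa_gen (j, \<beta>)) (fa_gen (j, \<alpha>))))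
             (bracket_elem n j \<alpha> \<beta>) | j \<alpha> \<beta>. j < m \<and> valid_exp n \<alpha> \<and> valid_exp n \<beta>}
   \<union> {fa_sub (fa_mult (fa_gen (j, \<alpha>)) (fa_gen (l, \<beta>))) (fa_mult (fa_gen (l, \<beta>)) (fa_gen (j, \<alpha>)))
       | j l \<alpha> \<beta>. j < m \<and> l < m \<and> j \<noteq> l \<and> valid_exp n \<alpha> \<and> valid_exp n \<beta>}"

inductive_set ideal :: "nat \<Rightarrow> nat \<Rightarrow> (gen list \<Rightarrow> 'a::field) set" for n m where
  rel: "r \<in> rels n m \<Longrightarrow> r \<in> ideal n m"
| zero: "fa_zero \<in> ideal n m"
| add: "x \<in> ideal n m \<Longrightarrow> y \<in> ideal n m \<Longrightarrow> fa_add x y \<in> ideal n m"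
| smult: "x \<in> ideal n m \<Longrightarrow> fa_smult c x \<in> ideal n m"
| mult: "x \<in> ideal n m \<Longrightarrow> fa_mult (fa_word u) (fa_mult x (fa_word v)) \<in> ideal n m"

definition fa_eq :: "nat \<Rightarrow> nat \<Rightarrow> (gen list \<Rightarrow> 'a::field) \<Rightarrow> (gen list \<Rightarrow> 'a) \<Rightarrow> bool" where
  "fa_eq n m x y \<longleftrightarrow> fa_sub x y \<in> ideal n m"

primrec wprod :: "(gen \<Rightarrow> gen list \<Rightarrow> 'a::field) \<Rightarrow> gen list \<Rightarrow> gen list \<Rightarrow> 'a" where
  "wprod \<phi> [] = fa_one"
| "wprod \<phi> (g # w) = fa_mult (\<phi> g) (wprod \<phi> w)"

definition fa_hom :: "(gen \<Rightarrow> gen list \<Rightarrow> 'a::field) \<Rightarrow> (gen list \<Rightarrow> 'a) \<Rightarrow> gen list \<Rightarrow> 'a" where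
  "fa_hom \<phi> x = (\<lambda>v. \<Sum>w\<in>{w. x w \<noteq> 0}. x w * wprod \<phi> w v)"

primrec fa_pow :: "(gen list \<Rightarrow> 'a::field) \<Rightarrow> nat \<Rightarrow> gen list \<Rightarrow> 'a" where
  "fa_pow x 0 = fa_one"
| "fa_pow x (Suc r) = fa_mult x (fa_pow x r)"

text \<open>Falling factorial x^{[r]} = x(x-1)...(x-r+1).\<close>
primrec fa_falling :: "(gen list \<Rightarrow> 'a::field) \<Rightarrow> nat \<Rightarrow> gen list \<Rightarrow> 'a" where
  "fa_falling x 0 = fa_one"
| "fa_falling x (Suc r) = fa_mult (fa_falling x r) (fa_sub x (fa_smult (of_nat r) fa_one))"

section \<open>Formal power series in t (t-adically completed tensor products)\<close>

definition ser_one :: "nat \<Rightarrow> gen list \<Rightarrow> 'a::field" where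
  "ser_one = (\<lambda>r. if r = 0 then fa_one else fa_zero)"

definition ser_mult :: "(nat \<Rightarrow> gen list \<Rightarrow> 'a::field) \<Rightarrow> (nat \<Rightarrow> gen list \<Rightarrow> 'a) \<Rightarrow> nat \<Rightarrow> gen list \<Rightarrow> 'a" where
  "ser_mult F G = (\<lambda>r w. \<Sum>i\<le>r. fa_mult (F i) (G (r - i)) w)"

definition ser_map :: "(gen \<Rightarrow> gen list \<Rightarrow> 'a::field) \<Rightarrow> (nat \<Rightarrow> gen list \<Rightarrow> 'a) \<Rightarrow> nat \<Rightarrow> gen list \<Rightarrow> 'a" where
  "ser_map \<phi> F = (\<lambda>r. fa_hom \<phi> (F r))"

definition ser_eq :: "nat \<Rightarrow> nat \<Rightarrow> (nat \<Rightarrow> gen list \<Rightarrow> 'a::field) \<Rightarrow> (nat \<Rightarrow> gen list \<Rightarrow> 'a) \<Rightarrow> bool" where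
  "ser_eq n m F G \<longleftrightarrow> (\<forall>r. fa_eq n m (F r) (G r))"

text \<open>Delta_0 (x) Id : U^{\<otimes>2} \<rightarrow> U^{\<otimes>3}\<close>
definition delta_left :: "gen \<Rightarrow> gen list \<Rightarrow> 'a::field" where
  "delta_left g = (if fst g = 0 then fa_add (fa_gen (0, snd g)) (fa_gen (1, snd g))
                   else fa_gen (fst g + 1, snd g))"

text \<open>Id (x) Delta_0 : U^{\<otimes>2} \<rightarrow> U^{\<otimes>3}\<close>
definition delta_right :: "gen \<Rightarrow> gen list \<Rightarrow> 'a::field" where
  "delta_right g = (if fst g = 0 then fa_gen g
                    else fa_add (fa_gen (fst g, snd g)) (fa_gen (fst g + 1, snd g)))"

text \<open>X \<mapsto> 1 (x) X\<close>
definition shift_slot :: "gen \<Rightarrow> gen list \<Rightarrow> 'a::field" where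
  "shift_slot g = fa_gen (fst g + 1, snd g)"

text \<open>epsilon (x) Id and Id (x) epsilon : U^{\<otimes>2} \<rightarrow> U\<close>
definition eps_left :: "gen \<Rightarrow> gen list \<Rightarrow> 'a::field" where
  "eps_left g = (if fst g = 0 then fa_zero else fa_gen (fst g - 1, snd g))"

definition eps_right :: "gen \<Rightarrow> gen list \<Rightarrow> 'a::field" where
  "eps_right g = (if fst g = 0 then fa_gen g else fa_zero)"

text \<open>F in (U(K^+) (x) U(K^+))[[t]]; F (x) 1 is F itself viewed in U^{\<otimes>3}.\<close>
definition is_twist :: "nat \<Rightarrow> (nat \<Rightarrow> gen list \<Rightarrow> 'a::field) \<Rightarrow> bool" where
  "is_twist n F \<longleftrightarrow>
     (\<forall>r. fa_elem n 2 (F r)) \<and>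
     (\<exists>G. (\<forall>r. fa_elem n 2 (G r)) \<and> ser_eq n 2 (ser_mult F G) ser_one \<and> ser_eq n 2 (ser_mult G F) ser_one) \<and>
     ser_eq n 3 (ser_mult F (ser_map delta_left F)) (ser_mult (ser_map shift_slot F) (ser_map delta_right F)) \<and>
     ser_eq n 1 (ser_map eps_left F) ser_one \<and>
     ser_eq n 1 (ser_map eps_right F) ser_one"

definition h_exp :: "int \<Rightarrow> int \<Rightarrow> int" where
  "h_exp k = (\<lambda>i. if i = k \<or> i = -k then 1 else 0)"

definition e_exp :: "int \<Rightarrow> int \<Rightarrow> int" where
  "e_exp k = (\<lambda>i. if i = k then 2 else if i = -k then 1 else 0)"

definition twistF :: "int \<Rightarrow> nat \<Rightarrow> gen list \<Rightarrow> 'a::field_char_0" where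
  "twistF k = (\<lambda>r. fa_smult ((-1) ^ r / fact r)
      (fa_mult (fa_falling (fa_gen (0, h_exp k)) r) (fa_pow (fa_gen (1, e_exp k)) r)))"

end

theory Submission
  imports Defs "HOL-Computational_Algebra.Formal_Power_Series"
begin

text \<open>
  For a single k the relation [h, e] = e gives e X^{[j]} = (X - 1)^{[j]} e for X = h. The divided
  falling factorials X^{[r]}/r! and the divided powers X^r/r! satisfy a Vandermonde identity for
  commuting summands, since both are determined by first-order recurrences. After e's are
  moved past falling factorials, the right-hand side of the cocycle identity for F(k) is turned
  into the left-hand side by two applications of this identity: to the coproduct of e, and to
  the sum of two h's sitting in different tensor factors. The same identity for X + (-X) = 0
  shows that \<Sum>_r (-1)^r (-h)^{[r]}/r! \<otimes> e^r t^r inverts F(k). For k \<noteq> k' the generators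
  attached to k commute with those attached to k', because their exponents have disjoint
  supports and so the bracket vanishes; this is all that is needed for the twist conditions of
  F(k) and F(k') to multiply.
\<close>

unbundle fps_syntax

section \<open>The free algebra\<close>

lemma fa_mult_Nil: "fa_mult x y [] = x [] * y []"
  by (simp add: fa_mult_def)

lemma fa_mult_Cons: "fa_mult x y (a # w) = x [] * y (a # w) + fa_mult (\<lambda>u. x (a # u)) y w"
  unfolding fa_mult_def length_Cons by (subst sum.atMost_Suc_shift) simp

lemma fa_mult_add_left: "fa_mult (\<lambda>u. f u + g u) z w = fa_mult f z w + fa_mult g z w"
  unfolding fa_mult_def by (simp add: distrib_right sum.distrib)

lemma fa_mult_add_right: "fa_mult z (\<lambda>u. f u + g u) w = fa_mult z f w + fa_mult z g w"
  unfolding fa_mult_def by (simp add: distrib_left sum.distrib)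

lemma fa_mult_scale_left: "fa_mult (\<lambda>u. c * f u) z w = c * fa_mult f z w"
  unfolding fa_mult_def by (simp add: sum_distrib_left mult.assoc)

lemma fa_mult_scale_right: "fa_mult z (\<lambda>u. c * f u) w = c * fa_mult z f w"
  unfolding fa_mult_def by (simp add: sum_distrib_left algebra_simps)

lemma fa_mult_assoc: "fa_mult (fa_mult x y) z = fa_mult x (fa_mult y z)"
proof
  show "fa_mult (fa_mult x y) z w = fa_mult x (fa_mult y z) w" for w
  proof (induction w arbitrary: x)
    case Nil
    then show ?case by (simp add: fa_mult_Nil)
  next
    case (Cons a w)
    have tail: "(\<lambda>u. fa_mult x y (a # u)) = (\<lambda>u. x [] * y (a # u) + fa_mult (\<lambda>v. x (a # v)) y u)"
      by (simp add: fa_mult_Cons)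
    have "fa_mult (fa_mult x y) z (a # w) = x [] * y [] * z (a # w) + (x [] * fa_mult (\<lambda>u. y (a # u)) z w
          + fa_mult (fa_mult (\<lambda>v. x (a # v)) y) z w)"
      by (simp add: fa_mult_Cons tail fa_mult_add_left fa_mult_scale_left fa_mult_Nil)
    also have "\<dots> = fa_mult x (fa_mult y z) (a # w)"
      using Cons.IH[of "\<lambda>v. x (a # v)"] by (simp add: fa_mult_Cons fa_mult_Nil algebra_simps)
    finally show ?case .
  qed
qed

lemma fa_mult_one_left: "fa_mult fa_one y w = y w"
  by (cases w) (simp_all add: fa_mult_Cons fa_mult_Nil, simp_all add: fa_mult_def fa_one_def)

lemma fa_mult_one_right: "fa_mult y fa_one w = y w"
  by (induction w arbitrary: y) (simp_all add: fa_mult_Nil fa_mult_Cons fa_one_def)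

lemma fa_mult_zero_left: "fa_mult (\<lambda>_. 0) y w = 0"
  by (simp add: fa_mult_def)

definition fa_supp :: "(gen list \<Rightarrow> 'a::zero) \<Rightarrow> gen list set" where
  "fa_supp x = {w. x w \<noteq> 0}"

lemma fa_supp_mult: "fa_supp (fa_mult x y) \<subseteq> (\<lambda>(u, v). u @ v) ` (fa_supp x \<times> fa_supp y)"
proof
  fix w assume "w \<in> fa_supp (fa_mult x y)"
  then obtain i where "x (take i w) * y (drop i w) \<noteq> 0"
    unfolding fa_supp_def fa_mult_def by (auto elim: sum.not_neutral_contains_not_neutral)
  then show "w \<in> (\<lambda>(u, v). u @ v) ` (fa_supp x \<times> fa_supp y)"
    unfolding fa_supp_def by (auto intro!: image_eqI[of _ _ "(take i w, drop i w)"])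
qed

typedef (overloaded) ('a::zero) free_alg = "{f :: gen list \<Rightarrow> 'a. finite (fa_supp f)}"
  morphisms fa_coeff Abs_free_alg
  by (rule exI[of _ "\<lambda>_. 0"]) (simp add: fa_supp_def)

setup_lifting type_definition_free_alg

lemma finite_fa_supp_pointwise:
  assumes "finite (fa_supp f)" "finite (fa_supp g)" "\<And>w. f w = 0 \<Longrightarrow> g w = 0 \<Longrightarrow> h w = 0"
  shows "finite (fa_supp h)"
  by (rule finite_subset[of _ "fa_supp f \<union> fa_supp g"]) (use assms in \<open>auto simp: fa_supp_def\<close>)

instantiation free_alg :: (field) ring_1
begin

lift_definition zero_free_alg :: "'a free_alg" is "\<lambda>_. 0"
  by (simp add: fa_supp_def)

lift_definition one_free_alg :: "'a free_alg" is "fa_one"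
  by (simp add: fa_supp_def fa_one_def)

lift_definition plus_free_alg :: "'a free_alg \<Rightarrow> 'a free_alg \<Rightarrow> 'a free_alg" is "\<lambda>x y w. x w + y w"
  by (erule (1) finite_fa_supp_pointwise) auto

lift_definition uminus_free_alg :: "'a free_alg \<Rightarrow> 'a free_alg" is "\<lambda>x w. - x w"
  by (simp add: fa_supp_def)

lift_definition minus_free_alg :: "'a free_alg \<Rightarrow> 'a free_alg \<Rightarrow> 'a free_alg" is "\<lambda>x y w. x w - y w"
  by (erule (1) finite_fa_supp_pointwise) auto

lift_definition times_free_alg :: "'a free_alg \<Rightarrow> 'a free_alg \<Rightarrow> 'a free_alg" is "fa_mult"
  by (rule finite_subset[OF fa_supp_mult]) auto

instance
proof
  fix a b c :: "'a free_alg"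
  show "a * b * c = a * (b * c)" by transfer (rule fa_mult_assoc)
  show "a + b + c = a + (b + c)" by transfer (simp add: add.assoc)
  show "a + b = b + a" by transfer (simp add: add.commute)
  show "0 + a = a" by transfer simp
  show "- a + a = 0" by transfer simp
  show "a - b = a + - b" by transfer simp
  show "(a + b) * c = a * c + b * c" by transfer (simp add: fun_eq_iff fa_mult_add_left)
  show "a * (b + c) = a * b + a * c" by transfer (simp add: fun_eq_iff fa_mult_add_right)
  show "1 * a = a" by transfer (simp add: fun_eq_iff fa_mult_one_left)
  show "a * 1 = a" by transfer (simp add: fun_eq_iff fa_mult_one_right)
  show "(0::'a free_alg) \<noteq> 1" by transfer (auto simp: fa_one_def fun_eq_iff)
qed

end

primrec fall :: "'r::ring_1 \<Rightarrow> nat \<Rightarrow> 'r" where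
  "fall X 0 = 1"
| "fall X (Suc r) = fall X r * (X - of_nat r)"

lemma fall_add: "fall (X::'r::ring_1) (a + d) = fall X a * fall (X - of_nat a) d"
  by (induction d) (simp_all add: mult.assoc algebra_simps)

lemma fall_zero: "fall (0::'r::ring_1) r = (if r = 0 then 1 else 0)"
  by (induction r) auto

lemma sum_triangle_swap:
  fixes g :: "nat \<Rightarrow> nat \<Rightarrow> 'b::comm_monoid_add"
  shows "(\<Sum>i\<le>r. \<Sum>j\<le>r - i. g i j) = (\<Sum>j\<le>r. \<Sum>i\<le>r - j. g i j)"
proof -
  have "(\<Sum>i\<le>r. \<Sum>j\<le>r - i. g i j) = (\<Sum>(i, j)\<in>(SIGMA i:{..r}. {..r - i}). g i j)"
    by (rule sum.Sigma) auto
  also have "\<dots> = (\<Sum>(j, i)\<in>(SIGMA j:{..r}. {..r - j}). g i j)"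
    by (rule sum.reindex_bij_witness[where i="\<lambda>(j, i). (i, j)" and j="\<lambda>(i, j). (j, i)"]) auto
  also have "\<dots> = (\<Sum>j\<le>r. \<Sum>i\<le>r - j. g i j)"
    by (rule sum.Sigma[symmetric]) auto
  finally show ?thesis .
qed

lemma sum_convolution_weights:
  fixes u v :: "nat \<Rightarrow> 'r::ring_1"
  shows "(\<Sum>i\<le>r. of_nat (Suc i) * (u (Suc i) * v (r - i)))
       + (\<Sum>i\<le>r. of_nat (Suc (r - i)) * (u i * v (Suc (r - i))))
       = of_nat (Suc r) * (\<Sum>i\<le>Suc r. u i * v (Suc r - i))"
proof -
  have first: "(\<Sum>i\<le>r. of_nat (Suc i) * (u (Suc i) * v (r - i)))
             = (\<Sum>i\<le>Suc r. of_nat i * (u i * v (Suc r - i)))"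
    unfolding sum.atMost_Suc_shift[of "\<lambda>i. of_nat i * (u i * v (Suc r - i))"] by simp
  have second: "(\<Sum>i\<le>r. of_nat (Suc (r - i)) * (u i * v (Suc (r - i))))
              = (\<Sum>i\<le>Suc r. of_nat (Suc r - i) * (u i * v (Suc r - i)))"
    by (simp add: Suc_diff_le del: of_nat_Suc of_nat_diff)
  have weights: "of_nat i * (u i * v (Suc r - i)) + of_nat (Suc r - i) * (u i * v (Suc r - i))
               = of_nat (Suc r) * (u i * v (Suc r - i))" if "i \<le> Suc r" for i
    using that by (simp flip: distrib_right of_nat_add)
  show ?thesis
    unfolding first second sum.distrib[symmetric] sum_distrib_left
    by (rule sum.cong[OF refl], rule weights) simp
qed

section \<open>Congruence modulo a two-sided ideal\<close>

locale ideal_congruence =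
  fixes I :: "'r::ring_1 set"
  assumes zero_mem: "0 \<in> I"
    and add_mem: "x \<in> I \<Longrightarrow> y \<in> I \<Longrightarrow> x + y \<in> I"
    and mult_left_mem: "x \<in> I \<Longrightarrow> y * x \<in> I"
    and mult_right_mem: "x \<in> I \<Longrightarrow> x * y \<in> I"
begin

lemma uminus_mem: "x \<in> I \<Longrightarrow> - x \<in> I"
  using mult_left_mem[of x "- 1"] by simp

lemma diff_mem: "x \<in> I \<Longrightarrow> y \<in> I \<Longrightarrow> x - y \<in> I"
  using add_mem[of x "- y"] uminus_mem[of y] by simp

lemma sum_mem: "(\<And>a. a \<in> A \<Longrightarrow> f a \<in> I) \<Longrightarrow> sum f A \<in> I"
  by (induction A rule: infinite_finite_induct) (simp_all add: zero_mem add_mem)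

definition eqv :: "'r \<Rightarrow> 'r \<Rightarrow> bool" (infix "\<approx>" 50) where
  "x \<approx> y \<longleftrightarrow> x - y \<in> I"

lemma eqv_refl [simp]: "x \<approx> x"
  by (simp add: eqv_def zero_mem)

lemma eqv_sym: "x \<approx> y \<Longrightarrow> y \<approx> x"
  unfolding eqv_def using uminus_mem[of "x - y"] by simp

lemma eqv_trans [trans]: "x \<approx> y \<Longrightarrow> y \<approx> z \<Longrightarrow> x \<approx> z"
  unfolding eqv_def using add_mem[of "x - y" "y - z"] by simp

lemma eqv_add: "a \<approx> b \<Longrightarrow> c \<approx> d \<Longrightarrow> a + c \<approx> b + d"
  unfolding eqv_def using add_mem[of "a - b" "c - d"] by (simp add: algebra_simps)

lemma eqv_diff: "a \<approx> b \<Longrightarrow> c \<approx> d \<Longrightarrow> a - c \<approx> b - d"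
  unfolding eqv_def using diff_mem[of "a - b" "c - d"] by (simp add: algebra_simps)

lemma eqv_mult_left: "a \<approx> b \<Longrightarrow> c * a \<approx> c * b"
  unfolding eqv_def using mult_left_mem[of "a - b" c] by (simp add: algebra_simps)

lemma eqv_mult_right: "a \<approx> b \<Longrightarrow> a * c \<approx> b * c"
  unfolding eqv_def using mult_right_mem[of "a - b" c] by (simp add: algebra_simps)

lemma eqv_mult: "a \<approx> b \<Longrightarrow> c \<approx> d \<Longrightarrow> a * c \<approx> b * d"
  by (meson eqv_mult_left eqv_mult_right eqv_trans)

lemma eqv_sum: "(\<And>i. i \<in> A \<Longrightarrow> f i \<approx> g i) \<Longrightarrow> sum f A \<approx> sum g A"
  by (induction A rule: infinite_finite_induct) (simp_all add: eqv_add)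

lemma eqv_mult_inverse:
  assumes "a * b \<approx> 1" "c * d \<approx> 1"
  shows "(a * c) * (d * b) \<approx> 1"
proof -
  have "(a * c) * (d * b) = a * (c * d) * b" by (simp add: mult.assoc)
  also have "\<dots> \<approx> a * 1 * b" by (intro eqv_mult_left eqv_mult_right assms(2))
  also have "\<dots> \<approx> 1" using assms(1) by simp
  finally show ?thesis .
qed

definition commute_mod :: "'r \<Rightarrow> 'r \<Rightarrow> bool" where
  "commute_mod a b \<longleftrightarrow> a * b \<approx> b * a"

lemma commute_mod_sym: "commute_mod a b \<Longrightarrow> commute_mod b a"
  unfolding commute_mod_def by (rule eqv_sym)

text \<open>Exactly central elements (scalars, natural numbers) are adjoined so that gen_subalg S is
  closed under the operations used below; commutation modulo I propagates from generators to
  the generated subalgebras.\<close>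
inductive_set gen_subalg :: "'r set \<Rightarrow> 'r set" for S where
  gen: "s \<in> S \<Longrightarrow> s \<in> gen_subalg S"
| one: "1 \<in> gen_subalg S"
| add: "x \<in> gen_subalg S \<Longrightarrow> y \<in> gen_subalg S \<Longrightarrow> x + y \<in> gen_subalg S"
| mult: "x \<in> gen_subalg S \<Longrightarrow> y \<in> gen_subalg S \<Longrightarrow> x * y \<in> gen_subalg S"
| central: "(\<And>x. z * x = x * z) \<Longrightarrow> z \<in> gen_subalg S"

lemma commute_mod_gen_subalg_right:
  assumes "\<And>t. t \<in> T \<Longrightarrow> commute_mod s t" and "y \<in> gen_subalg T"
  shows "commute_mod s y"
  using assms(2)
proof induction
  case (gen t)
  then show ?case using assms(1) by simp
next
  case (add x y)
  then show ?case unfolding commute_mod_def by (simp add: distrib_left distrib_right eqv_add)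
next
  case (mult x y)
  have "s * (x * y) = (s * x) * y" by (simp add: mult.assoc)
  also have "\<dots> \<approx> (x * s) * y" using mult unfolding commute_mod_def by (intro eqv_mult_right)
  also have "\<dots> = x * (s * y)" by (simp add: mult.assoc)
  also have "\<dots> \<approx> x * (y * s)" using mult unfolding commute_mod_def by (intro eqv_mult_left)
  finally show ?case unfolding commute_mod_def by (simp add: mult.assoc)
qed (simp_all add: commute_mod_def)

lemma commute_mod_gen_subalg:
  assumes "\<And>s t. s \<in> S \<Longrightarrow> t \<in> T \<Longrightarrow> commute_mod s t"
    and "x \<in> gen_subalg S" and "y \<in> gen_subalg T"
  shows "commute_mod x y"
proof -
  have "\<And>s. s \<in> S \<Longrightarrow> commute_mod s y"
    using assms(1,3) by (blast intro: commute_mod_gen_subalg_right)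
  then have "commute_mod y x"
    using assms(2) by (blast intro: commute_mod_gen_subalg_right commute_mod_sym)
  then show ?thesis by (rule commute_mod_sym)
qed

lemma gen_subalg_of_nat: "of_nat n \<in> gen_subalg S"
  by (rule central) (simp add: mult_of_nat_commute)

lemma gen_subalg_diff: "x \<in> gen_subalg S \<Longrightarrow> y \<in> gen_subalg S \<Longrightarrow> x - y \<in> gen_subalg S"
  using add[of x S "- 1 * y"] mult[of "- 1" S y] central[of "- 1" S] by simp

lemma gen_subalg_power: "x \<in> gen_subalg S \<Longrightarrow> x ^ n \<in> gen_subalg S"
  by (induction n) (auto intro: gen_subalg.intros)

lemma gen_subalg_fall: "x \<in> gen_subalg S \<Longrightarrow> fall x n \<in> gen_subalg S"
  by (induction n) (auto intro: gen_subalg.intros gen_subalg_diff gen_subalg_of_nat)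

lemma eqv_mult_fall_shift:
  assumes "E * Z \<approx> (Z - 1) * E"
  shows "E * fall Z j \<approx> fall (Z - 1) j * E"
proof (induction j)
  case (Suc j)
  have "E * fall Z (Suc j) = (E * fall Z j) * (Z - of_nat j)" by (simp add: mult.assoc)
  also have "\<dots> \<approx> (fall (Z - 1) j * E) * (Z - of_nat j)" by (rule eqv_mult_right[OF Suc])
  also have "\<dots> = fall (Z - 1) j * (E * Z - E * of_nat j)" by (simp add: mult.assoc algebra_simps)
  also have "\<dots> \<approx> fall (Z - 1) j * ((Z - 1) * E - of_nat j * E)"
    by (intro eqv_mult_left eqv_diff assms) (simp add: mult_of_nat_commute)
  also have "\<dots> = fall (Z - 1) (Suc j) * E" by (simp add: mult.assoc algebra_simps)
  finally show ?case .
qed simp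

lemma eqv_power_mult_fall:
  assumes "E * X \<approx> (X - 1) * E"
  shows "E ^ i * fall X j \<approx> fall (X - of_nat i) j * E ^ i"
proof (induction i)
  case (Suc i)
  have "E * (X - of_nat i) = E * X - of_nat i * E"
    by (simp add: algebra_simps mult_of_nat_commute)
  also have "\<dots> \<approx> (X - 1) * E - of_nat i * E" by (intro eqv_diff assms eqv_refl)
  finally have shift: "E * (X - of_nat i) \<approx> (X - of_nat i - 1) * E" by (simp add: algebra_simps)
  have "E ^ Suc i * fall X j = E * (E ^ i * fall X j)" by (simp add: mult.assoc)
  also have "\<dots> \<approx> E * (fall (X - of_nat i) j * E ^ i)" by (rule eqv_mult_left[OF Suc])
  also have "\<dots> = (E * fall (X - of_nat i) j) * E ^ i" by (simp add: mult.assoc)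
  also have "\<dots> \<approx> (fall (X - of_nat i - 1) j * E) * E ^ i"
    by (rule eqv_mult_right[OF eqv_mult_fall_shift[OF shift]])
  also have "\<dots> = fall (X - of_nat (Suc i)) j * E ^ Suc i" by (simp add: mult.assoc algebra_simps)
  finally show ?case .
qed simp

end

section \<open>Divided falling factorials and divided powers\<close>

locale scalar_congruence = ideal_congruence I for I :: "'r::ring_1 set" +
  fixes scalar :: "'k::field_char_0 \<Rightarrow> 'r"
  assumes scalar_add: "scalar (a + b) = scalar a + scalar b"
    and scalar_mult: "scalar (a * b) = scalar a * scalar b"
    and scalar_one: "scalar 1 = 1"
    and scalar_central: "scalar c * x = x * scalar c"
begin

lemma scalar_zero: "scalar 0 = 0"
  using scalar_add[of 0 0] by simp

lemma scalar_of_nat: "scalar (of_nat n) = of_nat n"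
  by (induction n) (simp_all add: scalar_zero scalar_add scalar_one)

lemma gen_subalg_scalar: "scalar c \<in> gen_subalg S"
  by (rule central) (simp add: scalar_central)

lemma eqv_cancel_of_nat:
  assumes "of_nat (Suc r) * a \<approx> of_nat (Suc r) * b"
  shows "a \<approx> b"
proof -
  have "scalar (1 / of_nat (Suc r)) * of_nat (Suc r) = scalar (1 / of_nat (Suc r) * of_nat (Suc r))"
    by (simp only: scalar_mult scalar_of_nat)
  then have inv: "scalar (1 / of_nat (Suc r)) * of_nat (Suc r) = 1"
    by (simp del: of_nat_Suc add: scalar_one)
  show ?thesis
    using eqv_mult_left[OF assms, of "scalar (1 / of_nat (Suc r))"]
    by (simp only: mult.assoc[symmetric] inv mult_1_left)
qed

lemma commute_mod_diff_of_nat: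
  assumes "commute_mod y X"
  shows "commute_mod y (X - of_nat m)"
  using eqv_diff[OF assms[unfolded commute_mod_def], of "y * of_nat m" "of_nat m * y"]
  by (simp add: commute_mod_def algebra_simps mult_of_nat_commute)

lemma eqv_product_recurrence:
  assumes "commute_mod v (X - of_nat p)"
    and "u * (X - of_nat p) = of_nat a * u'" and "v * (Y - of_nat q) = of_nat b * v'"
  shows "u * v * (X + Y - of_nat (p + q)) \<approx> of_nat a * (u' * v) + of_nat b * (u * v')"
proof -
  have "u * v * (X + Y - of_nat (p + q)) = u * (v * (X - of_nat p)) + u * (v * (Y - of_nat q))"
    by (simp add: algebra_simps)
  also have "\<dots> \<approx> (u * (X - of_nat p)) * v + u * (v * (Y - of_nat q))"
    using assms(1) unfolding commute_mod_def mult.assoc by (intro eqv_add eqv_mult_left eqv_refl)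
  also have "\<dots> = of_nat a * (u' * v) + of_nat b * (u * v')"
    by (simp only: assms(2,3)) (metis mult.assoc mult_of_nat_commute)
  finally show ?thesis .
qed

text \<open>For c = 1 the recurrences characterise X^{[i]}/i!, for c = 0 they characterise X^i/i!.\<close>
lemma binomial_convolution:
  fixes u v w :: "nat \<Rightarrow> 'r" and c :: nat
  assumes commute: "\<And>j. commute_mod (v j) X"
    and "u 0 = 1" and "v 0 = 1" and "w 0 = 1"
    and u_rec: "\<And>i. u i * (X - of_nat (i * c)) = of_nat (Suc i) * u (Suc i)"
    and v_rec: "\<And>i. v i * (Y - of_nat (i * c)) = of_nat (Suc i) * v (Suc i)"
    and w_rec: "\<And>i. w i * (X + Y - of_nat (i * c)) = of_nat (Suc i) * w (Suc i)"
  shows "w r \<approx> (\<Sum>i\<le>r. u i * v (r - i))"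
proof (induction r)
  case 0
  then show ?case using assms(2-4) by simp
next
  case (Suc r)
  have step: "u i * v (r - i) * (X + Y - of_nat (r * c)) \<approx>
      of_nat (Suc i) * (u (Suc i) * v (r - i)) + of_nat (Suc (r - i)) * (u i * v (Suc (r - i)))"
    if "i \<le> r" for i
  proof -
    have "r * c = i * c + (r - i) * c" using that by (simp flip: add_mult_distrib)
    then show ?thesis
      using eqv_product_recurrence[OF commute_mod_diff_of_nat[OF commute[of "r - i"], of "i * c"]
          u_rec[of i] v_rec[of "r - i"]]
      by (simp only:)
  qed
  have "of_nat (Suc r) * w (Suc r) = w r * (X + Y - of_nat (r * c))"
    by (rule w_rec[symmetric])
  also have "\<dots> \<approx> (\<Sum>i\<le>r. u i * v (r - i) * (X + Y - of_nat (r * c)))"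
    using eqv_mult_right[OF Suc] by (simp add: sum_distrib_right)
  also have "\<dots> \<approx> (\<Sum>i\<le>r. of_nat (Suc i) * (u (Suc i) * v (r - i)) + of_nat (Suc (r - i)) * (u i * v (Suc (r - i))))"
    by (rule eqv_sum, rule step) simp
  also have "\<dots> = of_nat (Suc r) * (\<Sum>i\<le>Suc r. u i * v (Suc r - i))"
    by (simp only: sum.distrib sum_convolution_weights)
  finally show ?case by (rule eqv_cancel_of_nat)
qed

definition dfall :: "'r \<Rightarrow> nat \<Rightarrow> 'r" where
  "dfall X r = scalar (1 / fact r) * fall X r"

definition dpow :: "'r \<Rightarrow> nat \<Rightarrow> 'r" where
  "dpow X r = scalar (1 / fact r) * X ^ r"

lemma scalar_fact_step: "of_nat (Suc i) * scalar (1 / fact (Suc i)) = scalar (1 / fact i)"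
proof -
  have "of_nat (Suc i) * scalar (1 / fact (Suc i)) = scalar (of_nat (Suc i) * (1 / fact (Suc i)))"
    by (simp only: scalar_mult scalar_of_nat)
  also have "of_nat (Suc i) * (1 / fact (Suc i)) = (1 / fact i :: 'k)"
    by (simp add: fact_Suc[of i] del: of_nat_Suc)
  finally show ?thesis .
qed

lemma dfall_rec: "dfall X i * (X - of_nat (i * 1)) = of_nat (Suc i) * dfall X (Suc i)"
  by (simp add: dfall_def mult.assoc flip: scalar_fact_step)

lemma dpow_rec: "dpow X i * (X - of_nat (i * 0)) = of_nat (Suc i) * dpow X (Suc i)"
proof -
  have "dpow X i * X = (of_nat (Suc i) * scalar (1 / fact (Suc i))) * (X ^ i * X)"
    by (simp only: scalar_fact_step dpow_def mult.assoc)
  also have "\<dots> = of_nat (Suc i) * dpow X (Suc i)"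
    by (simp only: dpow_def mult.assoc power_Suc2)
  finally show ?thesis by simp
qed

lemma gen_subalg_dfall: "X \<in> gen_subalg S \<Longrightarrow> dfall X r \<in> gen_subalg S"
  unfolding dfall_def by (intro mult gen_subalg_scalar gen_subalg_fall)

lemma gen_subalg_dpow: "X \<in> gen_subalg S \<Longrightarrow> dpow X r \<in> gen_subalg S"
  unfolding dpow_def by (intro mult gen_subalg_scalar gen_subalg_power)

lemma dfall_add:
  assumes "\<And>s t. s \<in> S \<Longrightarrow> t \<in> T \<Longrightarrow> commute_mod s t" "X \<in> gen_subalg S" "Y \<in> gen_subalg T"
  shows "dfall (X + Y) r \<approx> (\<Sum>i\<le>r. dfall X i * dfall Y (r - i))"
proof (rule binomial_convolution[where c = 1])
  show "commute_mod (dfall Y j) X" for j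
    by (rule commute_mod_gen_subalg[of T S]) (use assms in \<open>auto intro: commute_mod_sym gen_subalg_dfall\<close>)
qed (rule dfall_rec | simp add: dfall_def scalar_one)+

lemma dpow_add:
  assumes "\<And>s t. s \<in> S \<Longrightarrow> t \<in> T \<Longrightarrow> commute_mod s t" "X \<in> gen_subalg S" "Y \<in> gen_subalg T"
  shows "dpow (X + Y) r \<approx> (\<Sum>i\<le>r. dpow X i * dpow Y (r - i))"
proof (rule binomial_convolution[where c = 0])
  show "commute_mod (dpow Y j) X" for j
    by (rule commute_mod_gen_subalg[of T S]) (use assms in \<open>auto intro: commute_mod_sym gen_subalg_dpow\<close>)
qed (rule dpow_rec | simp add: dpow_def scalar_one)+

lemma eqv_power_mult_dfall:
  assumes "E * X \<approx> (X - 1) * E"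
  shows "E ^ i * dfall X j \<approx> dfall (X - of_nat i) j * E ^ i"
proof -
  have "E ^ i * dfall X j = scalar (1 / fact j) * (E ^ i * fall X j)"
    unfolding dfall_def by (metis mult.assoc scalar_central)
  also have "\<dots> \<approx> scalar (1 / fact j) * (fall (X - of_nat i) j * E ^ i)"
    by (rule eqv_mult_left[OF eqv_power_mult_fall[OF assms]])
  also have "\<dots> = dfall (X - of_nat i) j * E ^ i"
    unfolding dfall_def by (simp add: mult.assoc)
  finally show ?thesis .
qed

lemma dfall_split:
  assumes "a \<le> j"
  shows "scalar (fact j / (fact a * fact (j - a))) * dfall X j = dfall X a * dfall (X - of_nat a) (j - a)"
proof -
  obtain d where j: "j = a + d" using assms le_Suc_ex by blast
  have coeff: "fact j / (fact a * fact (j - a)) * (1 / fact j) = 1 / fact a * (1 / fact d :: 'k)"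
    by (simp add: j)
  have "scalar (fact j / (fact a * fact (j - a))) * dfall X j
      = scalar (1 / fact a) * (scalar (1 / fact d) * (fall X a * fall (X - of_nat a) d))"
    by (simp only: dfall_def mult.assoc[symmetric] scalar_mult[symmetric] coeff)
       (simp add: j fall_add scalar_mult mult.assoc)
  also have "\<dots> = dfall X a * dfall (X - of_nat a) d"
    unfolding dfall_def by (metis mult.assoc scalar_central)
  finally show ?thesis by (simp add: j)
qed

end

lift_definition fa_const :: "'a::field \<Rightarrow> 'a free_alg" is "\<lambda>c. fa_smult c fa_one"
  by (rule finite_subset[of _ "{[]}"]) (auto simp: fa_supp_def fa_smult_def fa_one_def)

lift_definition gen_el :: "gen \<Rightarrow> 'a::field free_alg" is fa_gen
  by (rule finite_subset[of _ "{[g]}" for g]) (auto simp: fa_supp_def fa_gen_def)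

lift_definition monom :: "gen list \<Rightarrow> 'a::field free_alg" is fa_word
  by (rule finite_subset[of _ "{u}" for u]) (auto simp: fa_supp_def fa_word_def)

lemma free_alg_eqI: "(\<And>w. fa_coeff x w = fa_coeff y w) \<Longrightarrow> x = y"
  by (simp add: fa_coeff_inject[symmetric] fun_eq_iff)

lemma finite_fa_supp_coeff: "finite (fa_supp (fa_coeff x))"
  using fa_coeff by auto

lemma fa_coeff_times: "fa_coeff (x * y) = fa_mult (fa_coeff x) (fa_coeff y)"
  by transfer simp

lemma fa_coeff_plus: "fa_coeff (x + y) w = fa_coeff x w + fa_coeff y w"
  by transfer simp

lemma fa_coeff_minus: "fa_coeff (x - y) = fa_sub (fa_coeff x) (fa_coeff y)"
  by transfer (simp add: fa_sub_def)

lemma fa_coeff_one: "fa_coeff (1::'a::field free_alg) = fa_one"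
  by transfer simp

lemma fa_coeff_zero: "fa_coeff (0::'a::field free_alg) = fa_zero"
  by transfer (simp add: fa_zero_def)

lemma fa_coeff_const: "fa_coeff (fa_const c) = fa_smult c fa_one"
  by transfer simp

lemma fa_coeff_gen_el: "fa_coeff (gen_el g) = fa_gen g"
  by transfer simp

lemma fa_coeff_monom: "fa_coeff (monom u) = fa_word u"
  by transfer simp

lemma fa_coeff_sum: "fa_coeff (sum f A) w = (\<Sum>a\<in>A. fa_coeff (f a) w)"
  by (induction A rule: infinite_finite_induct) (simp_all add: fa_coeff_zero fa_zero_def fa_coeff_plus)

lemma fa_coeff_const_times: "fa_coeff (fa_const c * x) = fa_smult c (fa_coeff x)"
  by (rule ext) (simp add: fa_coeff_times fa_coeff_const fa_smult_def fa_mult_scale_left fa_mult_one_left)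

lemma fa_coeff_times_const: "fa_coeff (x * fa_const c) = fa_smult c (fa_coeff x)"
  by (rule ext) (simp add: fa_coeff_times fa_coeff_const fa_smult_def fa_mult_scale_right fa_mult_one_right)

lemma fa_const_central: "fa_const c * x = x * fa_const c"
  by (rule free_alg_eqI) (simp add: fa_coeff_const_times fa_coeff_times_const)

lemma fa_const_add: "fa_const (a + b) = fa_const a + fa_const b"
  by (rule free_alg_eqI) (simp add: fa_coeff_const fa_coeff_plus fa_smult_def distrib_right)

lemma fa_const_mult: "fa_const (a * b) = fa_const a * fa_const b"
  by (rule free_alg_eqI) (simp add: fa_coeff_const fa_coeff_const_times fa_smult_def mult.assoc)

lemma fa_const_one: "fa_const 1 = 1"
  by (rule free_alg_eqI) (simp add: fa_coeff_const fa_coeff_one fa_smult_def)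

lemma fa_const_zero [simp]: "fa_const 0 = 0"
  by (rule free_alg_eqI) (simp add: fa_coeff_const fa_coeff_zero fa_smult_def fa_zero_def)

lemma fa_const_minus_one: "- x = fa_const (- 1) * x"
proof -
  have "fa_const (- 1) * x + x = fa_const (- 1 + 1) * x"
    by (simp only: fa_const_add fa_const_one distrib_right mult_1_left)
  then show ?thesis by (simp add: eq_neg_iff_add_eq_0 eq_commute[of "- x"])
qed

lemma monom_Nil: "monom [] = 1"
  by (rule free_alg_eqI) (simp add: fa_coeff_monom fa_coeff_one fa_word_def fa_one_def)

lemma fa_coeff_gen_el_times:
  "fa_coeff (gen_el g * z) w = (case w of [] \<Rightarrow> 0 | a # w' \<Rightarrow> if a = g then fa_coeff z w' else 0)"
proof (cases w)
  case Nil
  then show ?thesis by (simp add: fa_coeff_times fa_coeff_gen_el fa_mult_Nil fa_gen_def)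
next
  case (Cons a w')
  have tail: "(\<lambda>u. fa_gen g (a # u)) = (if a = g then fa_one else (\<lambda>_. 0))"
    by (auto simp: fa_gen_def fa_one_def fun_eq_iff)
  show ?thesis using Cons
    by (simp add: fa_coeff_times fa_coeff_gen_el fa_mult_Cons tail fa_mult_one_left fa_mult_zero_left)
       (simp add: fa_gen_def)
qed

lemma monom_Cons: "monom (g # u) = gen_el g * monom u"
  by (rule free_alg_eqI) (simp add: fa_coeff_gen_el_times fa_coeff_monom fa_word_def split: list.splits)

lemma free_alg_expansion: "x = (\<Sum>u\<in>fa_supp (fa_coeff x). fa_const (fa_coeff x u) * monom u)"
proof (rule free_alg_eqI)
  fix w
  have "fa_coeff (\<Sum>u\<in>fa_supp (fa_coeff x). fa_const (fa_coeff x u) * monom u) w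
      = (\<Sum>u\<in>fa_supp (fa_coeff x). fa_coeff x u * (if w = u then 1 else 0))"
    by (simp add: fa_coeff_sum fa_coeff_const_times fa_coeff_monom fa_smult_def fa_word_def)
  also have "\<dots> = fa_coeff x w"
    using finite_fa_supp_coeff[of x]
    by (simp add: if_distrib[of "(*) _"] sum.delta' fa_supp_def cong: if_cong)
  finally show "fa_coeff x w = fa_coeff (\<Sum>u\<in>fa_supp (fa_coeff x). fa_const (fa_coeff x u) * monom u) w"
    by simp
qed

definition rel_ideal :: "nat \<Rightarrow> nat \<Rightarrow> 'a::field free_alg set" where
  "rel_ideal n m = {x. fa_coeff x \<in> ideal n m}"

lemma rel_ideal_const_times: "x \<in> rel_ideal n m \<Longrightarrow> fa_const c * x \<in> rel_ideal n m"
  unfolding rel_ideal_def by (simp add: fa_coeff_const_times ideal.smult)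

lemma rel_ideal_add: "x \<in> rel_ideal n m \<Longrightarrow> y \<in> rel_ideal n m \<Longrightarrow> x + y \<in> rel_ideal n m"
  unfolding rel_ideal_def using ideal.add[of "fa_coeff x" n m "fa_coeff y"]
  by (simp add: fa_add_def fa_coeff_plus[abs_def])

lemma rel_ideal_zero: "0 \<in> rel_ideal n m"
  unfolding rel_ideal_def by (simp add: fa_coeff_zero ideal.zero)

lemma rel_ideal_sum: "(\<And>a. a \<in> A \<Longrightarrow> f a \<in> rel_ideal n m) \<Longrightarrow> sum f A \<in> rel_ideal n m"
  by (induction A rule: infinite_finite_induct) (simp_all add: rel_ideal_zero rel_ideal_add)

lemma rel_ideal_monom_times: "x \<in> rel_ideal n m \<Longrightarrow> monom u * x * monom v \<in> rel_ideal n m"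
  unfolding rel_ideal_def by (simp add: fa_coeff_times fa_coeff_monom fa_mult_assoc ideal.mult)

text \<open>The inductive ideal is only closed under multiplication by words, so general products
  are reduced to words through the monomial expansion.\<close>
lemma rel_ideal_mult_left: "x \<in> rel_ideal n m \<Longrightarrow> y * x \<in> rel_ideal n m"
proof -
  assume x: "x \<in> rel_ideal n m"
  have "y * x = (\<Sum>u\<in>fa_supp (fa_coeff y). fa_const (fa_coeff y u) * (monom u * x * monom []))"
    by (subst free_alg_expansion[of y]) (simp add: sum_distrib_right mult.assoc monom_Nil)
  also have "\<dots> \<in> rel_ideal n m"
    by (intro rel_ideal_sum rel_ideal_const_times rel_ideal_monom_times x)
  finally show ?thesis .
qed

lemma rel_ideal_mult_right: "x \<in> rel_ideal n m \<Longrightarrow> x * y \<in> rel_ideal n m"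
proof -
  assume x: "x \<in> rel_ideal n m"
  have "x * y = (\<Sum>u\<in>fa_supp (fa_coeff y). fa_const (fa_coeff y u) * (monom [] * x * monom u))"
    by (subst free_alg_expansion[of y], simp add: sum_distrib_left monom_Nil)
       (metis mult.assoc fa_const_central)
  also have "\<dots> \<in> rel_ideal n m"
    by (intro rel_ideal_sum rel_ideal_const_times rel_ideal_monom_times x)
  finally show ?thesis .
qed

interpretation U: scalar_congruence "rel_ideal n m" fa_const for n m
  by unfold_locales
    (auto intro: rel_ideal_zero rel_ideal_add rel_ideal_mult_left rel_ideal_mult_right
      fa_const_add fa_const_mult fa_const_one fa_const_central)

lemma U_eqv_iff: "U.eqv n m x y \<longleftrightarrow> fa_coeff (x - y) \<in> ideal n m"
  by (unfold U.eqv_def, unfold rel_ideal_def) simp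

lemma eqv_same_slot:
  assumes "j < m" "valid_exp n \<alpha>" "valid_exp n \<beta>" "bracket_elem n j \<alpha> \<beta> = fa_coeff z"
  shows "U.eqv n m (gen_el (j, \<alpha>) * gen_el (j, \<beta>)) (gen_el (j, \<beta>) * gen_el (j, \<alpha>) + (z::'a::field_char_0 free_alg))"
proof -
  have "fa_sub (fa_sub (fa_mult (fa_gen (j, \<alpha>)) (fa_gen (j, \<beta>))) (fa_mult (fa_gen (j, \<beta>)) (fa_gen (j, \<alpha>))))
          (bracket_elem n j \<alpha> \<beta> :: gen list \<Rightarrow> 'a) \<in> rels n m"
    unfolding rels_def using assms by blast
  note ideal.rel[OF this]
  then have "fa_coeff (gen_el (j, \<alpha>) * gen_el (j, \<beta>) - gen_el (j, \<beta>) * gen_el (j, \<alpha>) - z) \<in> ideal n m"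
    by (simp add: assms(4) fa_coeff_minus fa_coeff_times fa_coeff_gen_el)
  then show ?thesis by (simp add: U_eqv_iff algebra_simps)
qed

lemma commute_mod_other_slots:
  assumes "j < m" "l < m" "j \<noteq> l" "valid_exp n \<alpha>" "valid_exp n \<beta>"
  shows "U.commute_mod n m (gen_el (j, \<alpha>)) (gen_el (l, \<beta>) :: 'a::field_char_0 free_alg)"
proof -
  have "fa_sub (fa_mult (fa_gen (j, \<alpha>)) (fa_gen (l, \<beta>))) (fa_mult (fa_gen (l, \<beta>)) (fa_gen (j, \<alpha>)))
          \<in> (rels n m :: (gen list \<Rightarrow> 'a) set)"
    unfolding rels_def using assms by blast
  from ideal.rel[OF this] show ?thesis
    by (simp add: U.commute_mod_def U_eqv_iff fa_coeff_minus fa_coeff_times fa_coeff_gen_el)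
qed

lemma valid_exp_h_exp: "1 \<le> k \<Longrightarrow> k \<le> int n \<Longrightarrow> valid_exp n (h_exp k)"
  by (auto simp: valid_exp_def h_exp_def)

lemma valid_exp_e_exp: "1 \<le> k \<Longrightarrow> k \<le> int n \<Longrightarrow> valid_exp n (e_exp k)"
  by (auto simp: valid_exp_def e_exp_def)

definition supported_pm :: "int \<Rightarrow> (int \<Rightarrow> int) \<Rightarrow> bool" where
  "supported_pm k \<alpha> \<longleftrightarrow> (\<forall>i. \<alpha> i \<noteq> 0 \<longrightarrow> \<bar>i\<bar> = k)"

lemma brk_coef_disjoint_supports:
  assumes "1 \<le> k" "1 \<le> k'" "k \<noteq> k'" "supported_pm k \<alpha>" "supported_pm k' \<beta>"
  shows "brk_coef n \<alpha> \<beta> \<gamma> = 0"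
proof -
  have zero: "\<alpha> 0 = 0" "\<beta> 0 = 0"
    using assms unfolding supported_pm_def by auto
  have cross: "\<alpha> j * \<beta> l = 0" if "\<bar>j\<bar> = \<bar>l\<bar>" for j l
    using assms that unfolding supported_pm_def by auto
  have cross_terms: "\<alpha> (- i) * \<beta> i - \<alpha> i * \<beta> (- i) = 0" for i
    by (simp add: cross)
  show ?thesis unfolding brk_coef_def zero cross_terms by simp
qed

lemma brk_coef_h_e:
  assumes "1 \<le> k" "k \<le> int n"
  shows "brk_coef n (h_exp k) (e_exp k) \<gamma> = (if \<gamma> = e_exp k then 1 else 0)"
proof -
  have "(if \<gamma> = (\<lambda>j. h_exp k j + e_exp k j - unitv i j - unitv (-i) j)
          then h_exp k (-i) * e_exp k i - h_exp k i * e_exp k (-i) else 0)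
      = (if i = k \<and> \<gamma> = e_exp k then 1 else 0)" if "1 \<le> i" for i
  proof (cases "i = k")
    case True
    then have "(\<lambda>j. h_exp k j + e_exp k j - unitv i j - unitv (-i) j) = e_exp k"
      using assms by (auto simp: h_exp_def e_exp_def unitv_def)
    then show ?thesis using True assms by (simp add: h_exp_def e_exp_def)
  next
    case False
    then show ?thesis using that assms by (auto simp: h_exp_def e_exp_def)
  qed
  moreover have "h_exp k 0 = 0" "e_exp k 0 = 0"
    using assms by (auto simp: h_exp_def e_exp_def)
  ultimately have "brk_coef n (h_exp k) (e_exp k) \<gamma> = (\<Sum>i\<in>{1..int n}. if i = k \<and> \<gamma> = e_exp k then 1 else 0)"
    unfolding brk_coef_def by simp
  also have "\<dots> = (if \<gamma> = e_exp k then 1 else 0)"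
    using assms by (simp add: sum.delta)
  finally show ?thesis .
qed

lemma supported_pm_h_exp: "1 \<le> k \<Longrightarrow> supported_pm k (h_exp k)"
  by (auto simp: supported_pm_def h_exp_def)

lemma supported_pm_e_exp: "1 \<le> k \<Longrightarrow> supported_pm k (e_exp k)"
  by (auto simp: supported_pm_def e_exp_def)

lemma bracket_elem_disjoint_supports:
  assumes "1 \<le> k" "1 \<le> k'" "k \<noteq> k'" "supported_pm k \<alpha>" "supported_pm k' \<beta>"
  shows "bracket_elem n j \<alpha> \<beta> = fa_coeff (0::'a::field_char_0 free_alg)"
  by (auto simp: bracket_elem_def fa_coeff_zero fa_zero_def brk_coef_disjoint_supports[OF assms])

lemma bracket_elem_h_e:
  assumes "1 \<le> k" "k \<le> int n"
  shows "bracket_elem n j (h_exp k) (e_exp k) = fa_coeff (gen_el (j, e_exp k) :: 'a::field_char_0 free_alg)"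
  using brk_coef_h_e[OF assms] by (auto simp: bracket_elem_def fa_coeff_gen_el fa_gen_def fun_eq_iff)

primrec word_image :: "(gen \<Rightarrow> 'a::field free_alg) \<Rightarrow> gen list \<Rightarrow> 'a free_alg" where
  "word_image \<Phi> [] = 1"
| "word_image \<Phi> (g # w) = \<Phi> g * word_image \<Phi> w"

definition ext_hom :: "(gen \<Rightarrow> 'a::field free_alg) \<Rightarrow> 'a free_alg \<Rightarrow> 'a free_alg" where
  "ext_hom \<Phi> x = (\<Sum>w\<in>fa_supp (fa_coeff x). fa_const (fa_coeff x w) * word_image \<Phi> w)"

lemma ext_hom_eq_sum:
  assumes "finite S" "fa_supp (fa_coeff x) \<subseteq> S"
  shows "ext_hom \<Phi> x = (\<Sum>w\<in>S. fa_const (fa_coeff x w) * word_image \<Phi> w)"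
  unfolding ext_hom_def by (rule sum.mono_neutral_left) (use assms in \<open>auto simp: fa_supp_def\<close>)

lemma ext_hom_add: "ext_hom \<Phi> (x + y) = ext_hom \<Phi> x + ext_hom \<Phi> y"
proof -
  let ?S = "fa_supp (fa_coeff x) \<union> fa_supp (fa_coeff y)"
  have S: "finite ?S" using finite_fa_supp_coeff by auto
  have "ext_hom \<Phi> (x + y) = (\<Sum>w\<in>?S. fa_const (fa_coeff (x + y) w) * word_image \<Phi> w)"
    by (rule ext_hom_eq_sum[OF S]) (auto simp: fa_supp_def fa_coeff_plus)
  also have "\<dots> = ext_hom \<Phi> x + ext_hom \<Phi> y"
    by (simp add: ext_hom_eq_sum[OF S] fa_coeff_plus fa_const_add distrib_right sum.distrib)
  finally show ?thesis .
qed

lemma ext_hom_const_times: "ext_hom \<Phi> (fa_const c * x) = fa_const c * ext_hom \<Phi> x"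
proof -
  have "ext_hom \<Phi> (fa_const c * x)
      = (\<Sum>w\<in>fa_supp (fa_coeff x). fa_const (fa_coeff (fa_const c * x) w) * word_image \<Phi> w)"
    by (rule ext_hom_eq_sum[OF finite_fa_supp_coeff]) (auto simp: fa_supp_def fa_coeff_const_times fa_smult_def)
  then show ?thesis
    by (simp add: ext_hom_def fa_coeff_const_times fa_smult_def fa_const_mult sum_distrib_left mult.assoc)
qed

lemma ext_hom_zero: "ext_hom \<Phi> 0 = 0"
  by (simp add: ext_hom_def fa_coeff_zero fa_zero_def fa_supp_def)

lemma ext_hom_sum: "ext_hom \<Phi> (sum f A) = (\<Sum>a\<in>A. ext_hom \<Phi> (f a))"
  by (induction A rule: infinite_finite_induct) (simp_all add: ext_hom_zero ext_hom_add)

lemma ext_hom_one: "ext_hom \<Phi> 1 = 1"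
proof -
  have "ext_hom \<Phi> 1 = (\<Sum>w\<in>{[]}. fa_const (fa_coeff 1 w) * word_image \<Phi> w)"
    by (rule ext_hom_eq_sum) (auto simp: fa_supp_def fa_coeff_one fa_one_def)
  then show ?thesis by (simp add: fa_coeff_one fa_one_def fa_const_one)
qed

lemma ext_hom_gen_el_times: "ext_hom \<Phi> (gen_el g * z) = \<Phi> g * ext_hom \<Phi> z"
proof -
  let ?S = "fa_supp (fa_coeff z)"
  have "ext_hom \<Phi> (gen_el g * z) = (\<Sum>w\<in>Cons g ` ?S. fa_const (fa_coeff (gen_el g * z) w) * word_image \<Phi> w)"
  proof (rule ext_hom_eq_sum)
    show "fa_supp (fa_coeff (gen_el g * z)) \<subseteq> Cons g ` ?S"
    proof
      fix w assume "w \<in> fa_supp (fa_coeff (gen_el g * z))"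
      then show "w \<in> Cons g ` ?S"
        by (cases w) (auto simp: fa_supp_def fa_coeff_gen_el_times split: if_splits)
    qed
  qed (simp add: finite_fa_supp_coeff)
  also have "\<dots> = (\<Sum>w\<in>?S. fa_const (fa_coeff z w) * (\<Phi> g * word_image \<Phi> w))"
    by (simp add: sum.reindex fa_coeff_gen_el_times)
  also have "\<dots> = \<Phi> g * ext_hom \<Phi> z"
    unfolding ext_hom_def sum_distrib_left by (rule sum.cong, rule refl) (metis mult.assoc fa_const_central)
  finally show ?thesis .
qed

lemma ext_hom_monom_times: "ext_hom \<Phi> (monom u * y) = word_image \<Phi> u * ext_hom \<Phi> y"
  by (induction u) (simp_all add: monom_Nil monom_Cons mult.assoc ext_hom_gen_el_times)

lemma ext_hom_mult: "ext_hom \<Phi> (x * y) = ext_hom \<Phi> x * ext_hom \<Phi> y"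
proof -
  have "ext_hom \<Phi> (x * y) = ext_hom \<Phi> (\<Sum>u\<in>fa_supp (fa_coeff x). fa_const (fa_coeff x u) * (monom u * y))"
    by (subst free_alg_expansion[of x]) (simp add: sum_distrib_right mult.assoc)
  also have "\<dots> = (\<Sum>u\<in>fa_supp (fa_coeff x). fa_const (fa_coeff x u) * word_image \<Phi> u) * ext_hom \<Phi> y"
    by (simp add: ext_hom_sum ext_hom_const_times ext_hom_monom_times sum_distrib_right mult.assoc)
  finally show ?thesis by (simp add: ext_hom_def)
qed

lemma ext_hom_gen_el: "ext_hom \<Phi> (gen_el g) = \<Phi> g"
  using ext_hom_gen_el_times[of \<Phi> g 1] by (simp add: ext_hom_one)

lemma ext_hom_diff: "ext_hom \<Phi> (x - y) = ext_hom \<Phi> x - ext_hom \<Phi> y"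
  by (simp only: diff_conv_add_uminus ext_hom_add fa_const_minus_one[of y]
      fa_const_minus_one[of "ext_hom \<Phi> y"] ext_hom_const_times)

lemma ext_hom_of_nat: "ext_hom \<Phi> (of_nat k) = of_nat k"
  by (induction k) (simp_all add: ext_hom_zero ext_hom_one ext_hom_add)

lemma ext_hom_power: "ext_hom \<Phi> (x ^ r) = ext_hom \<Phi> x ^ r"
  by (induction r) (simp_all add: ext_hom_one ext_hom_mult)

lemma ext_hom_fall: "ext_hom \<Phi> (fall x r) = fall (ext_hom \<Phi> x) r"
  by (induction r) (simp_all add: ext_hom_one ext_hom_mult ext_hom_diff ext_hom_of_nat)

lemma fa_hom_fa_coeff:
  assumes "\<And>g. fa_coeff (\<Phi> g) = \<phi> g"
  shows "fa_hom \<phi> (fa_coeff x) = fa_coeff (ext_hom \<Phi> x)"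
proof -
  have "fa_coeff (word_image \<Phi> w) = wprod \<phi> w" for w
    by (induction w) (simp_all add: fa_coeff_one fa_coeff_times assms)
  then show ?thesis
    by (auto simp: fa_hom_def ext_hom_def fa_supp_def fa_coeff_sum fa_coeff_const_times fa_smult_def)
qed

definition coprod_left :: "gen \<Rightarrow> 'a::field free_alg" where
  "coprod_left g = (if fst g = 0 then gen_el (0, snd g) + gen_el (1, snd g) else gen_el (fst g + 1, snd g))"

definition coprod_right :: "gen \<Rightarrow> 'a::field free_alg" where
  "coprod_right g = (if fst g = 0 then gen_el g else gen_el (fst g, snd g) + gen_el (fst g + 1, snd g))"

definition slot_shift :: "gen \<Rightarrow> 'a::field free_alg" where
  "slot_shift g = gen_el (fst g + 1, snd g)"

definition counit_left :: "gen \<Rightarrow> 'a::field free_alg" where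
  "counit_left g = (if fst g = 0 then 0 else gen_el (fst g - 1, snd g))"

definition counit_right :: "gen \<Rightarrow> 'a::field free_alg" where
  "counit_right g = (if fst g = 0 then gen_el g else 0)"

lemma fa_coeff_coprod_left: "fa_coeff (coprod_left g) = delta_left g"
  by (simp add: coprod_left_def delta_left_def fa_add_def fa_coeff_plus[abs_def] fa_coeff_gen_el)

lemma fa_coeff_coprod_right: "fa_coeff (coprod_right g) = delta_right g"
  by (simp add: coprod_right_def delta_right_def fa_add_def fa_coeff_plus[abs_def] fa_coeff_gen_el)

lemma fa_coeff_slot_shift: "fa_coeff (slot_shift g) = shift_slot g"
  by (simp add: slot_shift_def shift_slot_def fa_coeff_gen_el)

lemma fa_coeff_counit_left: "fa_coeff (counit_left g) = eps_left g"
  by (simp add: counit_left_def eps_left_def fa_coeff_gen_el fa_coeff_zero)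

lemma fa_coeff_counit_right: "fa_coeff (counit_right g) = eps_right g"
  by (simp add: counit_right_def eps_right_def fa_coeff_gen_el fa_coeff_zero)

definition smul :: "'a::field \<Rightarrow> 'a free_alg \<Rightarrow> 'a free_alg" where
  "smul c x = fa_const c * x"

lemma smul_times_left: "smul c x * y = smul c (x * y)"
  unfolding smul_def by (simp add: mult.assoc)

lemma smul_times_right: "x * smul c y = smul c (x * y)"
  unfolding smul_def by (metis mult.assoc fa_const_central)

lemma smul_smul: "smul c (smul d x) = smul (c * d) x"
  unfolding smul_def by (simp add: fa_const_mult mult.assoc)

lemma smul_one: "smul 1 x = x"
  unfolding smul_def by (simp add: fa_const_one)

lemma smul_zero: "smul c 0 = 0"
  unfolding smul_def by simp

lemma smul_sum: "smul c (sum f A) = (\<Sum>a\<in>A. smul c (f a))"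
  unfolding smul_def by (simp add: sum_distrib_left)

lemma fa_coeff_smul: "fa_coeff (smul c x) = fa_smult c (fa_coeff x)"
  by (simp add: smul_def fa_coeff_const_times)

lemmas smul_simps = mult.assoc smul_times_left smul_times_right smul_smul smul_one

lemma eqv_smul: "U.eqv n m x y \<Longrightarrow> U.eqv n m (smul c x) (smul c y)"
  unfolding smul_def by (rule U.eqv_mult_left)

lemma ext_hom_smul: "ext_hom \<Phi> (smul c x) = smul c (ext_hom \<Phi> x)"
  unfolding smul_def by (rule ext_hom_const_times)

lemma dfall_eq_smul: "U.dfall X r = smul (1 / fact r) (fall X r)"
  unfolding U.dfall_def smul_def ..

lemma power_eq_smul_dpow: "X ^ r = smul (fact r) (U.dpow X r)"
  unfolding U.dpow_def smul_def by (simp flip: mult.assoc fa_const_mult add: fa_const_one)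

lemma ext_hom_dfall: "ext_hom \<Phi> (U.dfall X r) = U.dfall (ext_hom \<Phi> X) r"
  unfolding dfall_eq_smul by (simp add: ext_hom_smul ext_hom_fall)

section \<open>The twist F(k)\<close>

definition H :: "nat \<Rightarrow> int \<Rightarrow> 'a::field_char_0 free_alg" where
  "H j k = gen_el (j, h_exp k)"

definition E :: "nat \<Rightarrow> int \<Rightarrow> 'a::field_char_0 free_alg" where
  "E j k = gen_el (j, e_exp k)"

definition twist_coeff :: "int \<Rightarrow> nat \<Rightarrow> 'a::field_char_0 free_alg" where
  "twist_coeff k r = smul ((-1) ^ r) (U.dfall (H 0 k) r * E 1 k ^ r)"

lemma ext_hom_twist_coeff:
  "ext_hom \<Phi> (twist_coeff k r) = smul ((-1) ^ r) (U.dfall (ext_hom \<Phi> (H 0 k)) r * ext_hom \<Phi> (E 1 k) ^ r)"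
  unfolding twist_coeff_def by (simp add: ext_hom_mult ext_hom_smul ext_hom_dfall ext_hom_power)

text \<open>Both sides of the cocycle identity for F(k) are brought to \<Sum>_a cocycle_term k r a.\<close>
definition cocycle_term :: "int \<Rightarrow> nat \<Rightarrow> nat \<Rightarrow> 'a::field_char_0 free_alg" where
  "cocycle_term k r a =
     smul ((-1) ^ r) (U.dfall (H 0 k) a * U.dfall (H 0 k + H 1 k - of_nat a) (r - a) * (E 1 k ^ a * E 2 k ^ (r - a)))"

context
  fixes n :: nat and k :: int
  assumes k_range: "1 \<le> k" "k \<le> int n"
begin

lemma ext_hom_H_E:
  "ext_hom coprod_left (H 0 k) = H 0 k + H 1 k" "ext_hom coprod_left (E 1 k) = E 2 k"
  "ext_hom coprod_right (H 0 k) = H 0 k" "ext_hom coprod_right (E 1 k) = E 1 k + E 2 k"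
  "ext_hom slot_shift (H 0 k) = H 1 k" "ext_hom slot_shift (E 1 k) = E 2 k"
  "ext_hom counit_left (H 0 k) = 0" "ext_hom counit_left (E 1 k) = gen_el (0, e_exp k)"
  "ext_hom counit_right (H 0 k) = H 0 k" "ext_hom counit_right (E 1 k) = 0"
  by (simp_all add: H_def E_def ext_hom_gen_el coprod_left_def coprod_right_def slot_shift_def
      counit_left_def counit_right_def numeral_2_eq_2)

lemma commute_mod_H_E_slots:
  "j < m \<Longrightarrow> l < m \<Longrightarrow> j \<noteq> l \<Longrightarrow> \<alpha> \<in> {h_exp k, e_exp k} \<Longrightarrow> \<beta> \<in> {h_exp k, e_exp k} \<Longrightarrow>
   U.commute_mod n m (gen_el (j, \<alpha>)) (gen_el (l, \<beta>) :: 'a::field_char_0 free_alg)"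
  using commute_mod_other_slots[of j m l n \<alpha> \<beta>] valid_exp_h_exp[OF k_range] valid_exp_e_exp[OF k_range]
  by auto

lemma eqv_E_H:
  assumes "j < m"
  shows "U.eqv n m (E j k * H j k) ((H j k - 1) * (E j k :: 'a::field_char_0 free_alg))"
proof -
  have "U.eqv n m (H j k * E j k) (E j k * H j k + (E j k :: 'a free_alg))"
    unfolding H_def E_def
    by (rule eqv_same_slot[OF assms valid_exp_h_exp[OF k_range] valid_exp_e_exp[OF k_range]
          bracket_elem_h_e[OF k_range]])
  from U.eqv_diff[OF U.eqv_sym[OF this] U.eqv_refl, of "E j k"]
  show ?thesis by (simp add: algebra_simps)
qed

lemma eqv_E1_coprod_H: "U.eqv n 3 (E 1 k * (H 0 k + H 1 k)) ((H 0 k + H 1 k - 1) * (E 1 k :: 'a::field_char_0 free_alg))"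
proof -
  have "U.eqv n 3 (E 1 k * H 0 k) (H 0 k * (E 1 k :: 'a free_alg))"
    using commute_mod_H_E_slots[of 1 3 0 "e_exp k" "h_exp k"] unfolding U.commute_mod_def H_def E_def by simp
  from U.eqv_add[OF this eqv_E_H[of 1 3]] show ?thesis
    by (simp add: algebra_simps)
qed

text \<open>F (\<Delta>_0 \<otimes> Id)(F), coefficientwise, after moving the e's of F past the h's of
  (\<Delta>_0 \<otimes> Id)(F).\<close>
lemma twist_times_coprod_left:
  "U.eqv n 3 (twist_coeff k i * ext_hom coprod_left (twist_coeff k j))
     (smul ((-1) ^ (i + j)) (U.dfall (H 0 k) i * U.dfall (H 0 k + H 1 k - of_nat i) j * (E 1 k ^ i * E 2 k ^ j))
       :: 'a::field_char_0 free_alg)"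
proof -
  have "twist_coeff k i * ext_hom coprod_left (twist_coeff k j)
      = smul ((-1) ^ (i + j)) (U.dfall (H 0 k) i * (E 1 k ^ i * U.dfall (H 0 k + H 1 k) j) * (E 2 k ^ j :: 'a free_alg))"
    unfolding ext_hom_twist_coeff ext_hom_H_E unfolding twist_coeff_def
    by (simp add: smul_simps power_add mult.commute)
  also have "U.eqv n 3 \<dots> (smul ((-1) ^ (i + j))
      (U.dfall (H 0 k) i * (U.dfall (H 0 k + H 1 k - of_nat i) j * E 1 k ^ i) * E 2 k ^ j))"
    unfolding smul_def
    by (intro U.eqv_mult_left U.eqv_mult_right U.eqv_power_mult_dfall eqv_E1_coprod_H)
  also have "\<dots> = smul ((-1) ^ (i + j))
      (U.dfall (H 0 k) i * U.dfall (H 0 k + H 1 k - of_nat i) j * (E 1 k ^ i * E 2 k ^ j))"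
    by (simp add: mult.assoc)
  finally show ?thesis .
qed

lemma commute_mod_E2_slot0_slot1:
  "U.commute_mod n 3 (E 2 k ^ i) (U.dfall (H 0 k) a * U.dfall (H 0 k - of_nat a) b * E 1 k ^ a
     :: 'a::field_char_0 free_alg)"
proof (rule U.commute_mod_gen_subalg[of "{E 2 k}" "{H 0 k, E 1 k}"])
  show "E 2 k ^ i \<in> U.gen_subalg {E 2 k}" by (intro U.gen_subalg_power U.gen) simp
  show "U.dfall (H 0 k) a * U.dfall (H 0 k - of_nat a) b * E 1 k ^ a \<in> U.gen_subalg {H 0 k, E 1 k}"
    by (intro U.mult U.gen_subalg_dfall U.gen_subalg_power U.gen_subalg_diff U.gen_subalg_of_nat U.gen)
      simp_all
qed (auto simp: H_def E_def intro!: commute_mod_H_E_slots)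

lemma commute_mod_dfall_H1_H0: "U.commute_mod n 3 (U.dfall (H 1 k) i) (U.dfall (H 0 k) a :: 'a::field_char_0 free_alg)"
proof (rule U.commute_mod_gen_subalg[of "{H 1 k}" "{H 0 k}"])
  show "U.dfall (H 1 k) i \<in> U.gen_subalg {H 1 k}" "U.dfall (H 0 k) a \<in> U.gen_subalg {H 0 k}"
    by (intro U.gen_subalg_dfall U.gen, simp)+
qed (auto simp: H_def intro!: commute_mod_H_E_slots)

lemma slot_shift_twist_times_coprod_right_term:
  assumes "a \<le> j"
  shows "U.eqv n 3
     (smul c (U.dfall (H 1 k) i * (E 2 k ^ i * (U.dfall (H 0 k) j * smul (fact j) (U.dpow (E 1 k) a * U.dpow (E 2 k) (j - a))))))
     (smul c (U.dfall (H 0 k) a * (U.dfall (H 1 k) i * U.dfall (H 0 k - of_nat a) (j - a)) * (E 1 k ^ a * E 2 k ^ (i + j - a)))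
       :: 'a::field_char_0 free_alg)"
proof -
  let ?H0 = "H 0 k :: 'a free_alg" and ?H1 = "H 1 k :: 'a free_alg"
    and ?E1 = "E 1 k :: 'a free_alg" and ?E2 = "E 2 k :: 'a free_alg"
  let ?Y = "U.dfall ?H0 a * U.dfall (?H0 - of_nat a) (j - a) * ?E1 ^ a"
  have binom: "U.dfall ?H0 j * smul (fact j) (U.dpow ?E1 a * U.dpow ?E2 (j - a))
      = smul (fact j / (fact a * fact (j - a))) (U.dfall ?H0 j) * (?E1 ^ a * ?E2 ^ (j - a))"
    unfolding U.dpow_def smul_def[symmetric] by (simp add: smul_simps mult.commute)
  have "smul c (U.dfall ?H1 i * (?E2 ^ i * (U.dfall ?H0 j * smul (fact j) (U.dpow ?E1 a * U.dpow ?E2 (j - a)))))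
      = smul c (U.dfall ?H1 i * ((?E2 ^ i * ?Y) * ?E2 ^ (j - a)))"
    unfolding binom unfolding smul_def U.dfall_split[OF assms] by (simp add: mult.assoc)
  also have "U.eqv n 3 \<dots> (smul c (U.dfall ?H1 i * ((?Y * ?E2 ^ i) * ?E2 ^ (j - a))))"
    using commute_mod_E2_slot0_slot1[of i a "j - a"] unfolding U.commute_mod_def
    by (intro eqv_smul U.eqv_mult_left U.eqv_mult_right)
  also have "\<dots> = smul c ((U.dfall ?H1 i * U.dfall ?H0 a)
      * (U.dfall (?H0 - of_nat a) (j - a) * ?E1 ^ a * (?E2 ^ i * ?E2 ^ (j - a))))"
    by (simp add: mult.assoc)
  also have "U.eqv n 3 \<dots> (smul c ((U.dfall ?H0 a * U.dfall ?H1 i)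
      * (U.dfall (?H0 - of_nat a) (j - a) * ?E1 ^ a * (?E2 ^ i * ?E2 ^ (j - a)))))"
    using commute_mod_dfall_H1_H0[of i a] unfolding U.commute_mod_def
    by (intro eqv_smul U.eqv_mult_left U.eqv_mult_right)
  also have "\<dots> = smul c (U.dfall ?H0 a * (U.dfall ?H1 i * U.dfall (?H0 - of_nat a) (j - a))
      * (?E1 ^ a * ?E2 ^ (i + j - a)))"
    using assms by (simp add: mult.assoc flip: power_add)
  finally show ?thesis .
qed

text \<open>(1 \<otimes> F)(Id \<otimes> \<Delta>_0)(F), coefficientwise, after expanding (e \<otimes> 1 + 1 \<otimes> e)^j.\<close>
lemma slot_shift_twist_times_coprod_right:
  "U.eqv n 3 (ext_hom slot_shift (twist_coeff k i) * ext_hom coprod_right (twist_coeff k j))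
     (\<Sum>a\<le>j. smul ((-1) ^ (i + j)) (U.dfall (H 0 k) a * (U.dfall (H 1 k) i * U.dfall (H 0 k - of_nat a) (j - a))
        * (E 1 k ^ a * E 2 k ^ (i + j - a))) :: 'a::field_char_0 free_alg)"
proof -
  let ?H0 = "H 0 k :: 'a free_alg" and ?H1 = "H 1 k :: 'a free_alg"
    and ?E1 = "E 1 k :: 'a free_alg" and ?E2 = "E 2 k :: 'a free_alg"
  let ?c = "(-1) ^ (i + j) :: 'a"
  have "ext_hom slot_shift (twist_coeff k i) * ext_hom coprod_right (twist_coeff k j)
      = smul ?c (U.dfall ?H1 i * (?E2 ^ i * (U.dfall ?H0 j * smul (fact j) (U.dpow (?E1 + ?E2) j))))"
    unfolding ext_hom_twist_coeff ext_hom_H_E power_eq_smul_dpow[of "?E1 + ?E2"]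
    by (simp add: smul_simps power_add mult.commute mult.left_commute)
  also have "U.eqv n 3 \<dots> (smul ?c (U.dfall ?H1 i * (?E2 ^ i * (U.dfall ?H0 j
      * smul (fact j) (\<Sum>a\<le>j. U.dpow ?E1 a * U.dpow ?E2 (j - a))))))"
  proof -
    have "U.eqv n 3 (U.dpow (?E1 + ?E2) j) (\<Sum>a\<le>j. U.dpow ?E1 a * U.dpow ?E2 (j - a))"
      by (rule U.dpow_add[of "{?E1}" "{?E2}"]) (auto simp: E_def intro!: commute_mod_H_E_slots U.gen)
    then show ?thesis by (intro eqv_smul U.eqv_mult_left)
  qed
  also have "\<dots> = (\<Sum>a\<le>j. smul ?c (U.dfall ?H1 i * (?E2 ^ i * (U.dfall ?H0 j
      * smul (fact j) (U.dpow ?E1 a * U.dpow ?E2 (j - a))))))"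
    by (simp only: smul_sum sum_distrib_left)
  also have "U.eqv n 3 \<dots> (\<Sum>a\<le>j. smul ?c (U.dfall ?H0 a * (U.dfall ?H1 i * U.dfall (?H0 - of_nat a) (j - a))
      * (?E1 ^ a * ?E2 ^ (i + j - a))))"
    by (rule U.eqv_sum, rule slot_shift_twist_times_coprod_right_term) simp
  finally show ?thesis .
qed

lemma sum_twist_times_coprod_left:
  "U.eqv n 3 (\<Sum>i\<le>r. twist_coeff k i * ext_hom coprod_left (twist_coeff k (r - i)))
     (\<Sum>a\<le>r. cocycle_term k r a :: 'a::field_char_0 free_alg)"
proof (rule U.eqv_sum)
  fix i assume "i \<in> {..r}"
  then have "i + (r - i) = r" by simp
  then show "U.eqv n 3 (twist_coeff k i * ext_hom coprod_left (twist_coeff k (r - i))) (cocycle_term k r i)"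
    using twist_times_coprod_left[of i "r - i"] by (simp only: cocycle_term_def)
qed

lemma eqv_sum_dfall_H1_H0:
  "U.eqv n 3 (\<Sum>i\<le>j. U.dfall (H 1 k) i * U.dfall (H 0 k - of_nat a) (j - i))
     (U.dfall (H 0 k + H 1 k - of_nat a) j :: 'a::field_char_0 free_alg)"
proof -
  have conv: "U.eqv n 3 (U.dfall (H 1 k + (H 0 k - of_nat a)) j)
      (\<Sum>i\<le>j. U.dfall (H 1 k) i * U.dfall (H 0 k - of_nat a) (j - i) :: 'a free_alg)"
  proof (rule U.dfall_add[of "{H 1 k}" "{H 0 k}"])
    show "H 1 k \<in> U.gen_subalg {H 1 k}" by (rule U.gen) simp
    show "H 0 k - of_nat a \<in> U.gen_subalg {H 0 k}"
      by (intro U.gen_subalg_diff U.gen_subalg_of_nat U.gen) simp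
  qed (auto simp: H_def intro!: commute_mod_H_E_slots)
  have rearrange: "H 1 k + (H 0 k - of_nat a) = (H 0 k + H 1 k - of_nat a :: 'a free_alg)"
    by (simp add: algebra_simps)
  from U.eqv_sym[OF conv] show ?thesis unfolding rearrange .
qed

text \<open>After exchanging the order of summation, the inner sum over the powers of h in the
  first two factors is resummed by the Vandermonde identity for dfall.\<close>
lemma sum_slot_shift_twist_times_coprod_right:
  "U.eqv n 3 (\<Sum>i\<le>r. ext_hom slot_shift (twist_coeff k i) * ext_hom coprod_right (twist_coeff k (r - i)))
     (\<Sum>a\<le>r. cocycle_term k r a :: 'a::field_char_0 free_alg)"
proof -
  let ?c = "(-1) ^ r :: 'a" and ?N = "\<lambda>a. E 1 k ^ a * E 2 k ^ (r - a) :: 'a free_alg"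
  let ?S = "\<lambda>a i. smul ?c (U.dfall (H 0 k) a * (U.dfall (H 1 k) i * U.dfall (H 0 k - of_nat a) (r - a - i)) * ?N a)"
  have "U.eqv n 3 (\<Sum>i\<le>r. ext_hom slot_shift (twist_coeff k i) * ext_hom coprod_right (twist_coeff k (r - i)))
      (\<Sum>i\<le>r. \<Sum>a\<le>r - i. ?S a i)"
  proof (rule U.eqv_sum)
    fix i assume "i \<in> {..r}"
    then have "i + (r - i) = r" "\<And>a. r - i - a = r - a - i" by auto
    then show "U.eqv n 3 (ext_hom slot_shift (twist_coeff k i) * ext_hom coprod_right (twist_coeff k (r - i)))
        (\<Sum>a\<le>r - i. ?S a i)"
      using slot_shift_twist_times_coprod_right[of i "r - i"] by (simp only:)
  qed
  also have "(\<Sum>i\<le>r. \<Sum>a\<le>r - i. ?S a i) = (\<Sum>a\<le>r. \<Sum>i\<le>r - a. ?S a i)"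
    by (rule sum_triangle_swap)
  also have "\<dots> = (\<Sum>a\<le>r. smul ?c (U.dfall (H 0 k) a
      * (\<Sum>i\<le>r - a. U.dfall (H 1 k) i * U.dfall (H 0 k - of_nat a) (r - a - i)) * ?N a))"
    by (simp only: smul_sum sum_distrib_left sum_distrib_right)
  also have "U.eqv n 3 \<dots> (\<Sum>a\<le>r. cocycle_term k r a)"
    unfolding cocycle_term_def
    by (intro U.eqv_sum eqv_smul U.eqv_mult_left U.eqv_mult_right eqv_sum_dfall_H1_H0)
  finally show ?thesis .
qed

lemma twist_cocycle_coeff:
  "U.eqv n 3 (\<Sum>i\<le>r. twist_coeff k i * ext_hom coprod_left (twist_coeff k (r - i)))
             (\<Sum>i\<le>r. ext_hom slot_shift (twist_coeff k i) * ext_hom coprod_right (twist_coeff k (r - i))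
               :: 'a::field_char_0 free_alg)"
  by (rule U.eqv_trans[OF sum_twist_times_coprod_left U.eqv_sym[OF sum_slot_shift_twist_times_coprod_right]])

end

definition over_gens :: "nat \<Rightarrow> nat \<Rightarrow> 'a::field free_alg \<Rightarrow> bool" where
  "over_gens n m x \<longleftrightarrow> (\<forall>w\<in>fa_supp (fa_coeff x). \<forall>g\<in>set w. fst g < m \<and> valid_exp n (snd g))"

lemma fa_elem_fa_coeff: "fa_elem n m (fa_coeff x) \<longleftrightarrow> over_gens n m x"
  using finite_fa_supp_coeff[of x] by (auto simp: fa_elem_def over_gens_def fa_supp_def)

lemma over_gens_add:
  assumes "over_gens n m x" "over_gens n m y"
  shows "over_gens n m (x + y)"
proof -
  have "fa_supp (fa_coeff (x + y)) \<subseteq> fa_supp (fa_coeff x) \<union> fa_supp (fa_coeff y)"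
    by (auto simp: fa_supp_def fa_coeff_plus)
  then show ?thesis using assms unfolding over_gens_def by blast
qed

lemma over_gens_zero: "over_gens n m 0"
  by (simp add: over_gens_def fa_supp_def fa_coeff_zero fa_zero_def)

lemma over_gens_sum: "(\<And>a. a \<in> A \<Longrightarrow> over_gens n m (f a)) \<Longrightarrow> over_gens n m (sum f A)"
  by (induction A rule: infinite_finite_induct) (simp_all add: over_gens_zero over_gens_add)

lemma over_gens_mult: "over_gens n m x \<Longrightarrow> over_gens n m y \<Longrightarrow> over_gens n m (x * y)"
  using fa_supp_mult[of "fa_coeff x" "fa_coeff y"] unfolding over_gens_def fa_coeff_times by fastforce

lemma over_gens_const: "over_gens n m (fa_const c)"
  by (simp add: over_gens_def fa_supp_def fa_coeff_const fa_smult_def fa_one_def)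

lemma over_gens_one: "over_gens n m 1"
  using over_gens_const[of n m 1] by (simp add: fa_const_one)

lemma over_gens_smul: "over_gens n m x \<Longrightarrow> over_gens n m (smul c x)"
  unfolding smul_def by (rule over_gens_mult[OF over_gens_const])

lemma over_gens_diff: "over_gens n m x \<Longrightarrow> over_gens n m y \<Longrightarrow> over_gens n m (x - y)"
  by (simp only: diff_conv_add_uminus fa_const_minus_one[of y] over_gens_add over_gens_mult over_gens_const)

lemma over_gens_of_nat: "over_gens n m (of_nat k)"
  by (induction k) (simp_all add: over_gens_zero over_gens_one over_gens_add)

lemma over_gens_power: "over_gens n m x \<Longrightarrow> over_gens n m (x ^ r)"
  by (induction r) (simp_all add: over_gens_one over_gens_mult)

lemma over_gens_dfall: "over_gens n m x \<Longrightarrow> over_gens n m (U.dfall x r)"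
proof -
  assume "over_gens n m x"
  then have "over_gens n m (fall x r)"
    by (induction r) (simp_all add: over_gens_one over_gens_mult over_gens_diff over_gens_of_nat)
  then show ?thesis unfolding dfall_eq_smul by (rule over_gens_smul)
qed

lemma over_gens_gen_el: "fst g < m \<Longrightarrow> valid_exp n (snd g) \<Longrightarrow> over_gens n m (gen_el g)"
  by (simp add: over_gens_def fa_supp_def fa_coeff_gen_el fa_gen_def)

definition rel_ideal_fps :: "nat \<Rightarrow> nat \<Rightarrow> 'a::field_char_0 free_alg fps set" where
  "rel_ideal_fps n m = {A. \<forall>r. A $ r \<in> rel_ideal n m}"

interpretation UT: ideal_congruence "rel_ideal_fps n m" for n m
proof
  fix x y :: "'a::field_char_0 free_alg fps"
  show "0 \<in> rel_ideal_fps n m"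
    by (simp add: rel_ideal_fps_def U.zero_mem)
  show "x \<in> rel_ideal_fps n m \<Longrightarrow> y \<in> rel_ideal_fps n m \<Longrightarrow> x + y \<in> rel_ideal_fps n m"
    by (simp add: rel_ideal_fps_def U.add_mem)
  show "x \<in> rel_ideal_fps n m \<Longrightarrow> y * x \<in> rel_ideal_fps n m"
    by (simp add: rel_ideal_fps_def fps_mult_nth U.sum_mem U.mult_left_mem)
  show "x \<in> rel_ideal_fps n m \<Longrightarrow> x * y \<in> rel_ideal_fps n m"
    by (simp add: rel_ideal_fps_def fps_mult_nth U.sum_mem U.mult_right_mem)
qed

lemma UT_eqv_iff: "UT.eqv n m A B \<longleftrightarrow> (\<forall>r. U.eqv n m (A $ r) (B $ r))"
  by (unfold UT.eqv_def U.eqv_def, unfold rel_ideal_fps_def) simp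

lemma UT_eqv_mult_commute:
  assumes "\<And>i j. U.commute_mod n m (A $ i) (B $ j)"
  shows "UT.eqv n m (A * B) (B * A)"
  unfolding UT_eqv_iff
proof
  fix r
  have "(A * B) $ r = (\<Sum>i=0..r. A $ i * B $ (r - i))" by (rule fps_mult_nth)
  also have "U.eqv n m \<dots> (\<Sum>i=0..r. B $ (r - i) * A $ i)"
    by (rule U.eqv_sum) (use assms in \<open>simp add: U.commute_mod_def\<close>)
  also have "\<dots> = (\<Sum>i=0..r. B $ i * A $ (r - i))"
    by (rule sum.atLeastAtMost_rev[of _ 0 r, simplified, THEN trans]) (rule sum.cong, auto)
  also have "\<dots> = (B * A) $ r" by (rule fps_mult_nth[symmetric])
  finally show "U.eqv n m ((A * B) $ r) ((B * A) $ r)" .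
qed

definition fps_map :: "(gen \<Rightarrow> 'a::field free_alg) \<Rightarrow> 'a free_alg fps \<Rightarrow> 'a free_alg fps" where
  "fps_map \<Phi> A = Abs_fps (\<lambda>r. ext_hom \<Phi> (A $ r))"

lemma fps_map_nth: "fps_map \<Phi> A $ r = ext_hom \<Phi> (A $ r)"
  by (simp add: fps_map_def)

lemma fps_map_mult: "fps_map \<Phi> (A * B) = fps_map \<Phi> A * fps_map \<Phi> B"
  by (rule fps_ext) (simp add: fps_map_nth fps_mult_nth ext_hom_sum ext_hom_mult)

definition fps_twist :: "nat \<Rightarrow> 'a::field_char_0 free_alg fps \<Rightarrow> bool" where
  "fps_twist n F \<longleftrightarrow>
     (\<forall>r. over_gens n 2 (F $ r)) \<and>
     (\<exists>G. (\<forall>r. over_gens n 2 (G $ r)) \<and> UT.eqv n 2 (F * G) 1 \<and> UT.eqv n 2 (G * F) 1) \<and>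
     UT.eqv n 3 (F * fps_map coprod_left F) (fps_map slot_shift F * fps_map coprod_right F) \<and>
     UT.eqv n 1 (fps_map counit_left F) 1 \<and>
     UT.eqv n 1 (fps_map counit_right F) 1"

lemma ser_mult_fa_coeff:
  "ser_mult (\<lambda>r. fa_coeff (A $ r)) (\<lambda>r. fa_coeff (B $ r)) = (\<lambda>r. fa_coeff ((A * B) $ r))"
  by (intro ext) (simp add: ser_mult_def fps_mult_nth fa_coeff_sum fa_coeff_times atLeast0AtMost)

lemma ser_map_fa_coeff:
  "(\<And>g. fa_coeff (\<Phi> g) = \<phi> g) \<Longrightarrow> ser_map \<phi> (\<lambda>r. fa_coeff (A $ r)) = (\<lambda>r. fa_coeff (fps_map \<Phi> A $ r))"
  by (rule ext) (simp add: ser_map_def fps_map_nth fa_hom_fa_coeff)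

lemma ser_eq_fa_coeff:
  "UT.eqv n m A B \<Longrightarrow> ser_eq n m (\<lambda>r. fa_coeff (A $ r)) (\<lambda>r. fa_coeff (B $ r))"
  unfolding ser_eq_def fa_eq_def UT_eqv_iff U_eqv_iff fa_coeff_minus by blast

lemma ser_one_fa_coeff: "ser_one = (\<lambda>r. fa_coeff ((1 :: 'a::field_char_0 free_alg fps) $ r))"
  by (rule ext) (simp add: ser_one_def fa_coeff_one fa_coeff_zero)

lemma is_twist_fps_twist:
  assumes "fps_twist n F"
  shows "is_twist n (\<lambda>r. fa_coeff (F $ r))"
proof -
  obtain G where G: "\<forall>r. over_gens n 2 (G $ r)" "UT.eqv n 2 (F * G) 1" "UT.eqv n 2 (G * F) 1"
    using assms unfolding fps_twist_def by blast
  have inverse: "\<exists>G. (\<forall>r. fa_elem n 2 (G r)) \<and> ser_eq n 2 (ser_mult (\<lambda>r. fa_coeff (F $ r)) G) ser_one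
      \<and> ser_eq n 2 (ser_mult G (\<lambda>r. fa_coeff (F $ r))) ser_one"
    by (rule exI[of _ "\<lambda>r. fa_coeff (G $ r)"])
      (simp add: G fa_elem_fa_coeff ser_mult_fa_coeff ser_one_fa_coeff ser_eq_fa_coeff del: fps_one_nth)
  show ?thesis
    unfolding is_twist_def
    using assms inverse unfolding fps_twist_def
    by (simp add: fa_elem_fa_coeff ser_one_fa_coeff ser_mult_fa_coeff ser_eq_fa_coeff
        ser_map_fa_coeff[OF fa_coeff_coprod_left] ser_map_fa_coeff[OF fa_coeff_coprod_right]
        ser_map_fa_coeff[OF fa_coeff_slot_shift] ser_map_fa_coeff[OF fa_coeff_counit_left]
        ser_map_fa_coeff[OF fa_coeff_counit_right] del: fps_one_nth)
qed

lemma fps_twist_mult: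
  assumes F: "fps_twist n F" and F': "fps_twist n F'"
    and commute_left: "\<And>i j. U.commute_mod n 3 (F' $ i) (fps_map coprod_left F $ j)"
    and commute_right: "\<And>i j. U.commute_mod n 3 (fps_map coprod_right F $ i) (fps_map slot_shift F' $ j)"
  shows "fps_twist n (F * F')"
proof -
  obtain G where G: "\<forall>r. over_gens n 2 (G $ r)" "UT.eqv n 2 (F * G) 1" "UT.eqv n 2 (G * F) 1"
    using F unfolding fps_twist_def by blast
  obtain G' where G': "\<forall>r. over_gens n 2 (G' $ r)" "UT.eqv n 2 (F' * G') 1" "UT.eqv n 2 (G' * F') 1"
    using F' unfolding fps_twist_def by blast
  have over_gens_prod: "over_gens n 2 ((A * B) $ r)"
    if "\<forall>r. over_gens n 2 (A $ r)" "\<forall>r. over_gens n 2 (B $ r)" for A B :: "'a free_alg fps" and r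
    using that by (simp add: fps_mult_nth over_gens_sum over_gens_mult)
  have right_inverse: "UT.eqv n 2 (F * F' * (G' * G)) 1" by (rule UT.eqv_mult_inverse[OF G(2) G'(2)])
  have left_inverse: "UT.eqv n 2 (G' * G * (F * F')) 1" by (rule UT.eqv_mult_inverse[OF G'(3) G(3)])
  have "F * F' * fps_map coprod_left (F * F') = F * (F' * fps_map coprod_left F) * fps_map coprod_left F'"
    by (simp add: fps_map_mult mult.assoc)
  also have "UT.eqv n 3 \<dots> (F * (fps_map coprod_left F * F') * fps_map coprod_left F')"
    by (intro UT.eqv_mult_left UT.eqv_mult_right UT_eqv_mult_commute commute_left)
  also have "\<dots> = (F * fps_map coprod_left F) * (F' * fps_map coprod_left F')"
    by (simp add: mult.assoc)
  also have "UT.eqv n 3 \<dots> ((fps_map slot_shift F * fps_map coprod_right F) * (fps_map slot_shift F' * fps_map coprod_right F'))"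
    by (rule UT.eqv_mult) (use F F' in \<open>simp_all add: fps_twist_def\<close>)
  also have "\<dots> = fps_map slot_shift F * (fps_map coprod_right F * fps_map slot_shift F') * fps_map coprod_right F'"
    by (simp add: mult.assoc)
  also have "UT.eqv n 3 \<dots> (fps_map slot_shift F * (fps_map slot_shift F' * fps_map coprod_right F) * fps_map coprod_right F')"
    by (intro UT.eqv_mult_left UT.eqv_mult_right UT_eqv_mult_commute commute_right)
  also have "\<dots> = fps_map slot_shift (F * F') * fps_map coprod_right (F * F')"
    by (simp add: fps_map_mult mult.assoc)
  finally have cocycle: "UT.eqv n 3 (F * F' * fps_map coprod_left (F * F')) (fps_map slot_shift (F * F') * fps_map coprod_right (F * F'))" .
  have counits: "UT.eqv n 1 (fps_map counit_left (F * F')) 1" "UT.eqv n 1 (fps_map counit_right (F * F')) 1"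
    using UT.eqv_mult[of n 1 "fps_map \<epsilon> F" 1 "fps_map \<epsilon> F'" 1 for \<epsilon>] F F'
    unfolding fps_twist_def fps_map_mult by auto
  show ?thesis
    unfolding fps_twist_def using F F' G G' over_gens_prod right_inverse left_inverse cocycle counits
    unfolding fps_twist_def by blast
qed

definition twist_fps :: "int \<Rightarrow> 'a::field_char_0 free_alg fps" where
  "twist_fps k = Abs_fps (twist_coeff k)"

definition twist_inv_coeff :: "int \<Rightarrow> nat \<Rightarrow> 'a::field_char_0 free_alg" where
  "twist_inv_coeff k r = smul ((-1) ^ r) (U.dfall (- H 0 k) r * E 1 k ^ r)"

definition twist_inv_fps :: "int \<Rightarrow> 'a::field_char_0 free_alg fps" where
  "twist_inv_fps k = Abs_fps (twist_inv_coeff k)"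

lemma dfall_zero: "U.dfall 0 r = (if r = 0 then 1 else 0)"
  by (simp add: U.dfall_def fall_zero fa_const_one)

context
  fixes n :: nat and k :: int
  assumes k_range: "1 \<le> k" "k \<le> int n"
begin

lemma over_gens_H_E: "over_gens n 2 (H 0 k)" "over_gens n 2 (E 1 k)"
  unfolding H_def E_def
  by (intro over_gens_gen_el; simp add: valid_exp_h_exp[OF k_range] valid_exp_e_exp[OF k_range])+

lemma dfall_convolution_inverse:
  assumes X: "X \<in> U.gen_subalg {H 0 k}" and Y: "Y \<in> U.gen_subalg {H 0 k}" and sum_zero: "X + Y = 0"
  shows "U.eqv n 2 (\<Sum>i\<le>r. smul ((-1) ^ i) (U.dfall X i * E 1 k ^ i)
                            * smul ((-1) ^ (r - i)) (U.dfall Y (r - i) * E 1 k ^ (r - i)))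
                   (if r = 0 then 1 else (0::'a::field_char_0 free_alg))"
proof -
  let ?H0 = "H 0 k :: 'a free_alg" and ?E1 = "E 1 k :: 'a free_alg"
  have reorder: "U.eqv n 2 (smul ((-1) ^ i) (U.dfall X i * ?E1 ^ i) * smul ((-1) ^ (r - i)) (U.dfall Y (r - i) * ?E1 ^ (r - i)))
                (smul ((-1) ^ r) (U.dfall X i * U.dfall Y (r - i) * ?E1 ^ r))" if "i \<le> r" for i
  proof -
    have "U.commute_mod n 2 (?E1 ^ i) (U.dfall Y (r - i))"
    proof (rule U.commute_mod_gen_subalg[of "{?E1}" "{?H0}"])
      show "?E1 ^ i \<in> U.gen_subalg {?E1}" by (intro U.gen_subalg_power U.gen) simp
      show "U.dfall Y (r - i) \<in> U.gen_subalg {?H0}" by (rule U.gen_subalg_dfall[OF Y])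
    qed (use commute_mod_H_E_slots[OF k_range, of 1 2 0 "e_exp k" "h_exp k"] in \<open>simp add: H_def E_def\<close>)
    then have "U.eqv n 2 (smul ((-1) ^ r) (U.dfall X i * (?E1 ^ i * U.dfall Y (r - i)) * ?E1 ^ (r - i)))
                 (smul ((-1) ^ r) (U.dfall X i * (U.dfall Y (r - i) * ?E1 ^ i) * ?E1 ^ (r - i)))"
      unfolding U.commute_mod_def by (intro eqv_smul U.eqv_mult_left U.eqv_mult_right)
    moreover have "i + (r - i) = r" using that by simp
    ultimately show ?thesis by (simp add: smul_simps flip: power_add)
  qed
  have "U.eqv n 2 (\<Sum>i\<le>r. smul ((-1) ^ i) (U.dfall X i * ?E1 ^ i) * smul ((-1) ^ (r - i)) (U.dfall Y (r - i) * ?E1 ^ (r - i)))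
         (smul ((-1) ^ r) ((\<Sum>i\<le>r. U.dfall X i * U.dfall Y (r - i)) * ?E1 ^ r))"
    unfolding smul_sum sum_distrib_right by (rule U.eqv_sum, rule reorder) simp
  also have "U.eqv n 2 \<dots> (smul ((-1) ^ r) (U.dfall (X + Y) r * ?E1 ^ r))"
    using U.eqv_sym[OF U.dfall_add[OF _ X Y]] by (intro eqv_smul U.eqv_mult_right) (simp add: U.commute_mod_def)
  also have "\<dots> = (if r = 0 then 1 else 0)"
    by (simp add: sum_zero dfall_zero smul_one smul_zero)
  finally show ?thesis .
qed

lemma twist_fps_inverse:
  "UT.eqv n 2 (twist_fps k * twist_inv_fps k) (1::'a::field_char_0 free_alg fps)"
  "UT.eqv n 2 (twist_inv_fps k * twist_fps k) (1::'a::field_char_0 free_alg fps)"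
proof -
  have h: "H 0 k \<in> U.gen_subalg {H 0 k}" by (rule U.gen) simp
  have neg_h: "- H 0 k \<in> U.gen_subalg {H 0 k}"
    using U.gen_subalg_diff[OF U.gen_subalg_of_nat h, of 0] by simp
  show "UT.eqv n 2 (twist_fps k * twist_inv_fps k) 1" "UT.eqv n 2 (twist_inv_fps k * twist_fps k) 1"
    unfolding UT_eqv_iff fps_mult_nth atLeast0AtMost fps_one_nth twist_fps_def twist_inv_fps_def
      fps_nth_Abs_fps twist_coeff_def twist_inv_coeff_def
    by (intro allI dfall_convolution_inverse h neg_h; simp)+
qed

lemma fps_map_counit_twist_fps:
  "fps_map counit_left (twist_fps k) = (1::'a::field_char_0 free_alg fps)"
  "fps_map counit_right (twist_fps k) = (1::'a::field_char_0 free_alg fps)"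
  by (rule fps_ext; simp only: fps_map_nth twist_fps_def fps_nth_Abs_fps ext_hom_twist_coeff
      ext_hom_H_E[OF k_range] dfall_zero; simp add: smul_one smul_zero U.dfall_def fa_const_one power_0_left)+

lemma fps_twist_twist_fps: "fps_twist n (twist_fps k :: 'a::field_char_0 free_alg fps)"
  unfolding fps_twist_def
proof (intro conjI allI exI[of _ "twist_inv_fps k"])
  show "over_gens n 2 (twist_fps k $ r :: 'a free_alg)" "over_gens n 2 (twist_inv_fps k $ r :: 'a free_alg)" for r
    unfolding twist_fps_def twist_inv_fps_def fps_nth_Abs_fps twist_coeff_def twist_inv_coeff_def
      fa_const_minus_one[of "H 0 k"]
    by (intro over_gens_smul over_gens_mult over_gens_dfall over_gens_power over_gens_const over_gens_H_E)+
  show "UT.eqv n 3 (twist_fps k * fps_map coprod_left (twist_fps k))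
          (fps_map slot_shift (twist_fps k) * fps_map coprod_right (twist_fps k) :: 'a free_alg fps)"
    unfolding UT_eqv_iff fps_mult_nth fps_map_nth atLeast0AtMost
    by (simp add: twist_fps_def twist_cocycle_coeff[OF k_range])
qed (simp_all add: twist_fps_inverse fps_map_counit_twist_fps)

end

definition gens_at :: "int \<Rightarrow> nat \<Rightarrow> 'a::field_char_0 free_alg set" where
  "gens_at k m = {gen_el (j, \<alpha>) | j \<alpha>. j < m \<and> (\<alpha> = h_exp k \<or> \<alpha> = e_exp k)}"

lemma commute_mod_gens_at:
  assumes "1 \<le> k" "k \<le> int n" "1 \<le> k'" "k' \<le> int n" "k \<noteq> k'"
    and "s \<in> gens_at k m" "t \<in> gens_at k' m"
  shows "U.commute_mod n m s t"
proof -
  obtain j \<alpha> where s: "s = gen_el (j, \<alpha>)" "j < m" "\<alpha> = h_exp k \<or> \<alpha> = e_exp k"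
    using assms(6) unfolding gens_at_def by blast
  obtain l \<beta> where t: "t = gen_el (l, \<beta>)" "l < m" "\<beta> = h_exp k' \<or> \<beta> = e_exp k'"
    using assms(7) unfolding gens_at_def by blast
  have valid: "valid_exp n \<alpha>" "valid_exp n \<beta>"
    using s(3) t(3) assms(1-4) valid_exp_h_exp valid_exp_e_exp by auto
  have supported: "supported_pm k \<alpha>" "supported_pm k' \<beta>"
    using s(3) t(3) assms(1,3) supported_pm_h_exp supported_pm_e_exp by auto
  show ?thesis
  proof (cases "j = l")
    case True
    have "U.eqv n m (gen_el (j, \<alpha>) * gen_el (j, \<beta>)) (gen_el (j, \<beta>) * gen_el (j, \<alpha>) + 0)"
      by (rule eqv_same_slot[OF s(2) valid bracket_elem_disjoint_supports[OF assms(1,3,5) supported]])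
    then show ?thesis using s t True by (simp add: U.commute_mod_def)
  next
    case False
    then show ?thesis using s t commute_mod_other_slots[OF s(2) t(2) False valid] by simp
  qed
qed

lemma gen_subalg_smul_dfall_power:
  "x \<in> U.gen_subalg S \<Longrightarrow> y \<in> U.gen_subalg S \<Longrightarrow> smul c (U.dfall x r * y ^ r) \<in> U.gen_subalg S"
  unfolding smul_def by (intro U.mult U.gen_subalg_scalar U.gen_subalg_dfall U.gen_subalg_power)

lemma twist_coeff_images_in_gen_subalg:
  assumes "1 \<le> k" "k \<le> int n"
  shows "twist_coeff k r \<in> U.gen_subalg (gens_at k 3)"
    and "ext_hom coprod_left (twist_coeff k r) \<in> U.gen_subalg (gens_at k 3)"
    and "ext_hom coprod_right (twist_coeff k r) \<in> U.gen_subalg (gens_at k 3)"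
    and "ext_hom slot_shift (twist_coeff k r) \<in> U.gen_subalg (gens_at k 3)"
proof -
  have gens: "gen_el (j, h_exp k) \<in> U.gen_subalg (gens_at k 3)" "gen_el (j, e_exp k) \<in> U.gen_subalg (gens_at k 3)"
    if "j < 3" for j
    using that by (auto simp: gens_at_def intro: U.gen)
  note closure = gen_subalg_smul_dfall_power U.add gens
  show "twist_coeff k r \<in> U.gen_subalg (gens_at k 3)"
    unfolding twist_coeff_def H_def E_def by (intro closure) simp_all
  show "ext_hom coprod_left (twist_coeff k r) \<in> U.gen_subalg (gens_at k 3)"
    "ext_hom coprod_right (twist_coeff k r) \<in> U.gen_subalg (gens_at k 3)"
    "ext_hom slot_shift (twist_coeff k r) \<in> U.gen_subalg (gens_at k 3)"
    unfolding ext_hom_twist_coeff ext_hom_H_E[OF assms] unfolding H_def E_def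
    by (intro closure; simp)+
qed

lemma twist_fps_cross_commute:
  assumes "1 \<le> k" "k \<le> int n" "1 \<le> k'" "k' \<le> int n" "k \<noteq> k'"
  shows "U.commute_mod n 3 (twist_fps k' $ i) (fps_map coprod_left (twist_fps k) $ j :: 'a::field_char_0 free_alg)"
    and "U.commute_mod n 3 (fps_map coprod_right (twist_fps k) $ i) (fps_map slot_shift (twist_fps k') $ j :: 'a::field_char_0 free_alg)"
proof -
  have cross: "U.commute_mod n 3 s t" if "s \<in> gens_at k' 3" "t \<in> gens_at k 3" for s t :: "'a free_alg"
    using commute_mod_gens_at[of k' n k] assms that by simp
  have cross': "U.commute_mod n 3 s t" if "s \<in> gens_at k 3" "t \<in> gens_at k' 3" for s t :: "'a free_alg"
    using commute_mod_gens_at[of k n k'] assms that by simp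
  note images = twist_coeff_images_in_gen_subalg[OF assms(1,2)]
    and images' = twist_coeff_images_in_gen_subalg[OF assms(3,4)]
  show "U.commute_mod n 3 (twist_fps k' $ i) (fps_map coprod_left (twist_fps k) $ j :: 'a free_alg)"
    unfolding twist_fps_def fps_map_nth fps_nth_Abs_fps
    by (rule U.commute_mod_gen_subalg[OF cross images'(1) images(2)])
  show "U.commute_mod n 3 (fps_map coprod_right (twist_fps k) $ i) (fps_map slot_shift (twist_fps k') $ j :: 'a free_alg)"
    unfolding twist_fps_def fps_map_nth fps_nth_Abs_fps
    by (rule U.commute_mod_gen_subalg[OF cross' images(3) images'(4)])
qed

lemma fa_coeff_of_nat: "fa_coeff (of_nat i :: 'a::field free_alg) = fa_smult (of_nat i) fa_one"
  by (induction i) (auto simp: fun_eq_iff fa_coeff_zero fa_zero_def fa_smult_def fa_coeff_plus fa_coeff_one distrib_right)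

lemma fa_coeff_fall: "fa_coeff (fall x r) = fa_falling (fa_coeff x) r"
  by (induction r) (simp_all add: fa_coeff_one fa_coeff_times fa_coeff_minus fa_coeff_of_nat)

lemma fa_coeff_power: "fa_coeff (x ^ r) = fa_pow (fa_coeff x) r"
  by (induction r) (simp_all add: fa_coeff_one fa_coeff_times)

lemma twistF_eq: "twistF k = (\<lambda>r. fa_coeff (twist_fps k $ r))"
proof
  fix r
  have coeff: "twist_coeff k r = smul ((-1) ^ r / fact r) (fall (H 0 k) r * E 1 k ^ r)"
    by (simp add: twist_coeff_def dfall_eq_smul smul_simps)
  show "twistF k r = fa_coeff (twist_fps k $ r)"
    unfolding twist_fps_def fps_nth_Abs_fps coeff
    by (simp add: twistF_def fa_coeff_smul fa_coeff_times fa_coeff_fall fa_coeff_power fa_coeff_gen_el H_def E_def)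
qed

theorem mainTheorem7:
  fixes n :: nat and k k' :: int
  assumes "1 \<le> n" and "1 \<le> k" and "k \<le> int n" and "1 \<le> k'" and "k' \<le> int n" and "k \<noteq> k'"
  shows "is_twist n (ser_mult (twistF k) (twistF k') :: nat \<Rightarrow> gen list \<Rightarrow> 'a::field_char_0)"
proof -
  have "fps_twist n (twist_fps k * twist_fps k' :: 'a free_alg fps)"
    using assms
    by (intro fps_twist_mult fps_twist_twist_fps twist_fps_cross_commute) auto
  then show ?thesis
    unfolding twistF_eq ser_mult_fa_coeff by (rule is_twist_fps_twist)
qed

end
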